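(* The generating function $H(t,x)$ is algebraic of degree $4$ and \[ H(t,x)=\frac{x\left(1-\sqrt{1-4t}\right)\left(1-x+x\sqrt{1-4t}-\sqrt{1-4tx^2}\right)}{(1-x)\sqrt{1-4t}\left(1-4tx+\sqrt{1-4tx^2}\sqrt{1-4t}-\sqrt{1-4t}-\sqrt{1-4tx^2}\right)}. \]
   Context: A bicolored Dyck path is a finite sequence of steps from $\{U_1,U_2,D\}$ ($U_1,U_2$ raise the height by $1$, $D$ lowers it by $1$) starting and ending at height $0$ and never going below height $0$; its length is its number of steps. Let $h_{n,m}$ be the number of pairs $(P,m)$ where $P$ is a bicolored Dyck path of length $2n$ containing exactly one $U_2$ step, this $U_2$ step being the $p$-th step of $P$, and $m$ is an integer with $1\le m\le p$ (a "pointer" from the $U_2$ step to the $m$-th step). Set $H(t,x)=\sum_{n,m\ge0}h_{n,m}t^nx^m$. *)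

theory Defs
  imports "HOL-Analysis.Analysis" "HOL-Computational_Algebra.Computational_Algebra"
begin

datatype step = U1 | U2 | D

fun step_val :: "step \<Rightarrow> int" where
  "step_val U1 = 1" | "step_val U2 = 1" | "step_val D = -1"

definition bicolored_dyck :: "step list \<Rightarrow> bool" where
  "bicolored_dyck P \<longleftrightarrow>
     (\<forall>k\<le>length P. 0 \<le> sum_list (map step_val (take k P))) \<and>
     sum_list (map step_val P) = 0"

definition h :: "nat \<Rightarrow> nat \<Rightarrow> nat" where
  "h n m = card {P. bicolored_dyck P \<and> length P = 2 * n \<and> count_list P U2 = 1 \<and>
                   (\<exists>p. 1 \<le> p \<and> p \<le> length P \<and> P ! (p - 1) = U2 \<and> 1 \<le> m \<and> m \<le> p)}"

text \<open>H as a formal power series in t whose coefficients are polynomials in x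
  (h n m = 0 for m > 2n).\<close>
definition H_fps :: "rat poly fps" where
  "H_fps = Abs_fps (\<lambda>n. \<Sum>m\<le>2*n. monom (of_nat (h n m)) m)"

definition eval_at_H :: "rat poly poly poly \<Rightarrow> rat poly fps" where
  "eval_at_H P = poly (map_poly fps_of_poly P) H_fps"

definition H_closed :: "real \<Rightarrow> real \<Rightarrow> real" where
  "H_closed t x =
     x * (1 - sqrt (1 - 4*t)) * (1 - x + x * sqrt (1 - 4*t) - sqrt (1 - 4*t*x^2)) /
     ((1 - x) * sqrt (1 - 4*t) *
      (1 - 4*t*x + sqrt (1 - 4*t*x^2) * sqrt (1 - 4*t) - sqrt (1 - 4*t) - sqrt (1 - 4*t*x^2)))"

end

theory Submission
  imports Defs
begin

(* Cutting a marked path a U2 b at its U2 step, where the prefix a ends at height k, leaves a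
   unicoloured path from height k + 1 down to 0.  With the Catalan series C(t) this gives
   (1 - K) B(x) = K C(t) for B(x) = sum of x^(position of U2) t^n and K = x t C(x^2 t) C(t), and
   summing the pointer weights x + ... + x^p gives (1 - x) H = x (B(1) - B(x)).  Since
   C(t) = (1 - s) / (2 t) with s = sqrt(1 - 4 t), and C(x^2 t) likewise involves
   r = sqrt(1 - 4 t x^2), evaluating the series for small real t yields the closed form.
   Algebraically H lies in Q(x, t)(s, r), where 1, s, r, s r are linearly independent (a descent
   at t = 1/4).  Multiplying by conjugates writes N H = a + b s + c r + d s r with N, a, b, c, d
   polynomials, which eliminating s and r turns into a quartic for H; any polynomial relation for
   H also holds at the four distinct conjugates s -> +-s, r -> +-r, so it has degree at least 4. *)

section \<open>Heights of step sequences\<close>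

definition height :: "step list \<Rightarrow> int" where
  "height xs = sum_list (map step_val xs)"

fun nonneg_from :: "int \<Rightarrow> step list \<Rightarrow> bool" where
  "nonneg_from k [] \<longleftrightarrow> 0 \<le> k"
| "nonneg_from k (s # xs) \<longleftrightarrow> 0 \<le> k \<and> nonneg_from (k + step_val s) xs"

definition dyck_from :: "int \<Rightarrow> step list \<Rightarrow> bool" where
  "dyck_from k xs \<longleftrightarrow> nonneg_from k xs \<and> k + height xs = 0"

lemma height_Nil [simp]: "height [] = 0"
  and height_Cons [simp]: "height (s # xs) = step_val s + height xs"
  and height_append [simp]: "height (xs @ ys) = height xs + height ys"
  by (simp_all add: height_def)

lemma nonneg_from_iff_prefixes:
  "nonneg_from k xs \<longleftrightarrow> (\<forall>i\<le>length xs. 0 \<le> k + height (take i xs))"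
proof (induction xs arbitrary: k)
  case (Cons s xs)
  have "(\<forall>i\<le>length (s # xs). 0 \<le> k + height (take i (s # xs))) \<longleftrightarrow>
        0 \<le> k \<and> (\<forall>i\<le>length xs. 0 \<le> k + height (take (Suc i) (s # xs)))"
    unfolding le_simps(2)[symmetric] length_Cons All_less_Suc2 by simp
  then show ?case
    using Cons.IH[of "k + step_val s"] by (simp add: add.assoc)
qed simp

lemma nonneg_from_nonneg: "nonneg_from k xs \<Longrightarrow> 0 \<le> k"
  by (cases xs) auto

lemma nonneg_from_height: "nonneg_from k xs \<Longrightarrow> 0 \<le> k + height xs"
proof (induction xs arbitrary: k)
  case (Cons s xs)
  then show ?case using Cons.IH[of "k + step_val s"] by (simp add: add.assoc)
qed simp

lemma nonneg_from_append:
  "nonneg_from k (xs @ ys) \<longleftrightarrow> nonneg_from k xs \<and> nonneg_from (k + height xs) ys"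
  by (induction xs arbitrary: k) (auto simp: add.assoc dest: nonneg_from_nonneg)

lemma dyck_from_Nil [simp]: "dyck_from k [] \<longleftrightarrow> k = 0"
  by (auto simp: dyck_from_def)

lemma dyck_from_Cons [simp]:
  "dyck_from k (s # xs) \<longleftrightarrow> 0 \<le> k \<and> dyck_from (k + step_val s) xs"
  by (auto simp: dyck_from_def add.assoc)

lemma bicolored_dyck_iff_dyck_from: "bicolored_dyck P \<longleftrightarrow> dyck_from 0 P"
  by (simp add: bicolored_dyck_def dyck_from_def nonneg_from_iff_prefixes height_def)

lemma height_le_length: "height xs \<le> int (length xs)"
proof (induction xs)
  case (Cons s xs)
  then show ?case by (cases s) auto
qed simp

lemma even_length_plus_height: "even (int (length xs) + height xs)"
proof (induction xs)
  case (Cons s xs)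
  then show ?case by (cases s) (auto simp: algebra_simps)
qed simp

lemma UNIV_step: "(UNIV :: step set) = {U1, U2, D}"
  using step.exhaust by auto

lemma finite_UNIV_step: "finite (UNIV :: step set)"
  by (simp add: UNIV_step)

lemma finite_step_lists: "finite {xs :: step list. length xs = l}"
  using finite_lists_length_eq[OF finite_UNIV_step, of l] by simp

lemma finite_step_lists_le: "finite {xs :: step list. length xs \<le> l}"
  using finite_lists_length_le[OF finite_UNIV_step, of l] by simp

lemma card_step_lists: "card {xs :: step list. length xs = l} = 3 ^ l"
proof -
  have "card (UNIV :: step set) = 3"
    by (simp add: UNIV_step)
  then show ?thesis
    using card_lists_length_eq[OF finite_UNIV_step, of l] by simp
qed

lemma step_neq_U2: "s \<noteq> U2 \<Longrightarrow> s = U1 \<or> s = D"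
  by (cases s) auto

definition return_paths :: "nat \<Rightarrow> int \<Rightarrow> step list set" where
  "return_paths l k = {xs. length xs = l \<and> U2 \<notin> set xs \<and> dyck_from k xs}"

definition rise_paths :: "nat \<Rightarrow> int \<Rightarrow> step list set" where
  "rise_paths l k = {xs. length xs = l \<and> U2 \<notin> set xs \<and> nonneg_from 0 xs \<and> height xs = k}"

lemma finite_return_paths: "finite (return_paths l k)"
  by (rule finite_subset[OF _ finite_step_lists[of l]]) (auto simp: return_paths_def)

lemma finite_rise_paths: "finite (rise_paths l k)"
  by (rule finite_subset[OF _ finite_step_lists[of l]]) (auto simp: rise_paths_def)

lemma card_return_paths_le: "card (return_paths l k) \<le> 3 ^ l"
  unfolding card_step_lists[symmetric]
  by (rule card_mono[OF finite_step_lists]) (auto simp: return_paths_def)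

lemma card_return_paths_0: "card (return_paths 0 k) = (if k = 0 then 1 else 0)"
proof -
  have "return_paths 0 k = (if k = 0 then {[]} else {})"
    by (auto simp: return_paths_def)
  then show ?thesis by simp
qed

lemma card_rise_paths_0: "card (rise_paths 0 k) = (if k = 0 then 1 else 0)"
proof -
  have "rise_paths 0 k = (if k = 0 then {[]} else {})"
    by (auto simp: rise_paths_def)
  then show ?thesis by simp
qed

lemma return_paths_Suc:
  "return_paths (Suc l) k =
     (if 0 \<le> k then Cons U1 ` return_paths l (k + 1) \<union> Cons D ` return_paths l (k - 1) else {})"
proof -
  have "xs \<in> return_paths (Suc l) k \<longleftrightarrow>
        xs \<in> (if 0 \<le> k then Cons U1 ` return_paths l (k + 1) \<union> Cons D ` return_paths l (k - 1) else {})"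
    for xs
  proof (cases xs)
    case (Cons s ys)
    then show ?thesis using step_neq_U2[of s] by (auto simp: return_paths_def)
  qed (auto simp: return_paths_def)
  then show ?thesis by blast
qed

lemma rise_paths_Suc:
  "rise_paths (Suc l) k =
     (if 0 \<le> k then (\<lambda>xs. xs @ [U1]) ` rise_paths l (k - 1) \<union> (\<lambda>xs. xs @ [D]) ` rise_paths l (k + 1)
      else {})"
proof -
  have "xs \<in> rise_paths (Suc l) k \<longleftrightarrow>
        xs \<in> (if 0 \<le> k then (\<lambda>xs. xs @ [U1]) ` rise_paths l (k - 1) \<union> (\<lambda>xs. xs @ [D]) ` rise_paths l (k + 1)
              else {})"
    for xs
  proof (cases xs rule: rev_cases)
    case (snoc ys s)
    then show ?thesis
      using step_neq_U2[of s] by (auto simp: rise_paths_def nonneg_from_append dest: nonneg_from_height)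
  qed (auto simp: rise_paths_def)
  then show ?thesis by blast
qed

lemma card_return_paths_Suc:
  "card (return_paths (Suc l) k) =
     (if 0 \<le> k then card (return_paths l (k + 1)) + card (return_paths l (k - 1)) else 0)"
proof -
  have "card (Cons U1 ` return_paths l (k + 1) \<union> Cons D ` return_paths l (k - 1)) =
        card (return_paths l (k + 1)) + card (return_paths l (k - 1))"
    by (subst card_Un_disjoint) (auto simp: finite_return_paths card_image)
  then show ?thesis by (simp add: return_paths_Suc)
qed

lemma card_rise_paths_Suc:
  "card (rise_paths (Suc l) k) =
     (if 0 \<le> k then card (rise_paths l (k + 1)) + card (rise_paths l (k - 1)) else 0)"
proof -
  have "card ((\<lambda>xs. xs @ [U1]) ` rise_paths l (k - 1) \<union> (\<lambda>xs. xs @ [D]) ` rise_paths l (k + 1)) =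
        card (rise_paths l (k + 1)) + card (rise_paths l (k - 1))"
    by (subst card_Un_disjoint) (auto simp: finite_rise_paths card_image inj_on_def)
  then show ?thesis by (simp add: rise_paths_Suc)
qed

lemma card_rise_paths: "card (rise_paths l k) = card (return_paths l k)"
  by (induction l arbitrary: k)
     (simp_all add: card_rise_paths_0 card_return_paths_0 card_rise_paths_Suc card_return_paths_Suc)

section \<open>Catalan and Dyck generating functions\<close>

fun catalan :: "nat \<Rightarrow> nat" where
  "catalan 0 = 1"
| "catalan (Suc n) = (\<Sum>i\<le>n. catalan i * catalan (n - i))"

definition catalan_fps :: "'a::idom fps" where
  "catalan_fps = Abs_fps (\<lambda>n. of_nat (catalan n))"

lemma catalan_fps_nth_0 [simp]: "catalan_fps $ 0 = 1"
  by (simp add: catalan_fps_def)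

lemma catalan_fps_eq: "catalan_fps = 1 + fps_X * catalan_fps ^ 2"
proof (rule fps_ext)
  fix n
  show "catalan_fps $ n = (1 + fps_X * catalan_fps ^ 2) $ n"
  proof (cases n)
    case (Suc m)
    have "catalan_fps $ n = of_nat (\<Sum>i\<le>m. catalan i * catalan (m - i))"
      by (simp add: catalan_fps_def Suc)
    also have "\<dots> = (catalan_fps * catalan_fps) $ m"
      by (simp add: fps_mult_nth catalan_fps_def atLeast0AtMost)
    finally show ?thesis by (simp add: Suc power2_eq_square)
  qed simp
qed

lemma fps_compose_X2_nth:
  "(F oo fps_X ^ 2) $ n = (if even n then F $ (n div 2) else (0::'a::idom))"
proof -
  have "(F oo fps_X ^ 2) $ n = (\<Sum>i=0..n. F $ i * (if n = 2 * i then 1 else 0))"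
    by (simp add: fps_compose_nth power_mult[symmetric])
  also have "\<dots> = (if even n then F $ (n div 2) else 0)"
  proof (cases "even n")
    case True
    then have "\<And>i. n = 2 * i \<longleftrightarrow> i = n div 2" by auto
    then show ?thesis using True by (simp add: if_distrib[of "\<lambda>v. F $ _ * v"] cong: if_cong)
  next
    case False
    then have "\<And>i. n \<noteq> 2 * i" by auto
    then show ?thesis using False by simp
  qed
  finally show ?thesis .
qed

lemma fps_compose_X2_inj: "F oo fps_X ^ 2 = G oo fps_X ^ 2 \<Longrightarrow> F = (G::'a::idom fps)"
proof (rule fps_ext)
  fix n
  assume "F oo fps_X ^ 2 = G oo fps_X ^ 2"
  then have "(F oo fps_X ^ 2) $ (2 * n) = (G oo fps_X ^ 2) $ (2 * n)" by simp
  then show "F $ n = G $ n" by (simp add: fps_compose_X2_nth)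
qed

definition dyck_fps :: "'a::idom fps" where
  "dyck_fps = catalan_fps oo fps_X ^ 2"

lemma dyck_fps_nth_0 [simp]: "dyck_fps $ 0 = 1"
  by (simp add: dyck_fps_def fps_compose_X2_nth)

lemma dyck_fps_eq: "dyck_fps = 1 + fps_X ^ 2 * (dyck_fps :: 'a::idom fps) ^ 2"
proof -
  have "dyck_fps = (1 + fps_X * catalan_fps ^ 2) oo (fps_X ^ 2 :: 'a fps)"
    unfolding dyck_fps_def by (subst catalan_fps_eq) simp
  also have "\<dots> = 1 + fps_X ^ 2 * dyck_fps ^ 2"
    by (simp add: fps_compose_add_distrib fps_compose_mult_distrib fps_compose_power dyck_fps_def)
  finally show ?thesis .
qed

lemma dyck_fps_power_rec:
  "fps_X ^ k * (dyck_fps :: 'a::idom fps) ^ Suc k =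
     (if k = 0 then 1 else fps_X * (fps_X ^ (k - 1) * dyck_fps ^ k)) +
     fps_X * (fps_X ^ Suc k * dyck_fps ^ Suc (Suc k))"
proof (cases k)
  case 0
  then show ?thesis by (subst dyck_fps_eq) (simp add: power2_eq_square algebra_simps)
next
  case (Suc j)
  have "fps_X ^ k * dyck_fps ^ Suc k = fps_X ^ k * dyck_fps ^ k * (dyck_fps :: 'a fps)"
    by simp
  also have "\<dots> = fps_X ^ k * dyck_fps ^ k * (1 + fps_X ^ 2 * dyck_fps ^ 2)"
    by (subst dyck_fps_eq) simp
  also have "\<dots> = fps_X * (fps_X ^ (k - 1) * dyck_fps ^ k) + fps_X * (fps_X ^ Suc k * dyck_fps ^ Suc (Suc k))"
    using Suc by (simp add: algebra_simps power2_eq_square)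
  finally show ?thesis using Suc by simp
qed

lemma card_return_paths_neg: "k < 0 \<Longrightarrow> card (return_paths l k) = 0"
  by (cases l) (simp_all add: card_return_paths_0 card_return_paths_Suc)

lemma card_return_paths_eq_coeff:
  "of_nat (card (return_paths l (int k))) = (fps_X ^ k * dyck_fps ^ Suc k :: 'a::idom fps) $ l"
proof (induction l arbitrary: k)
  case 0
  then show ?case by (simp add: card_return_paths_0 fps_X_power_mult_nth)
next
  case (Suc l)
  have up: "(fps_X ^ Suc k * (dyck_fps :: 'a fps) ^ Suc (Suc k)) $ l = of_nat (card (return_paths l (int k + 1)))"
    using Suc.IH[of "Suc k"] by (simp add: add.commute)
  have down: "(fps_X ^ (k - 1) * (dyck_fps :: 'a fps) ^ k) $ l = of_nat (card (return_paths l (int k - 1)))"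
    if "k \<noteq> 0"
    using Suc.IH[of "k - 1"] that by (simp add: of_nat_diff)
  have "(fps_X ^ k * (dyck_fps :: 'a fps) ^ Suc k) $ Suc l =
        (fps_X ^ Suc k * dyck_fps ^ Suc (Suc k)) $ l + (if k = 0 then 0 else (fps_X ^ (k - 1) * dyck_fps ^ k) $ l)"
    by (subst dyck_fps_power_rec) (simp add: fps_X_mult_nth)
  also have "\<dots> = of_nat (card (return_paths (Suc l) (int k)))"
    using up down by (simp add: card_return_paths_Suc card_return_paths_neg)
  finally show ?case by simp
qed

lemma catalan_eq_card_return_paths: "catalan n = card (return_paths (2 * n) 0)"
proof -
  have "real (catalan n) = (dyck_fps :: real fps) $ (2 * n)"
    by (simp add: dyck_fps_def fps_compose_X2_nth catalan_fps_def)
  also have "\<dots> = real (card (return_paths (2 * n) (int 0)))"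
    using card_return_paths_eq_coeff[of "2 * n" 0, where 'a = real] by simp
  finally show ?thesis by simp
qed

section \<open>Paths with one marked step\<close>

definition marked_paths :: "nat \<Rightarrow> step list set" where
  "marked_paths N = {P. length P = N \<and> count_list P U2 = 1 \<and> dyck_from 0 P}"

definition U2_pos :: "step list \<Rightarrow> nat" where
  "U2_pos P = length (takeWhile (\<lambda>s. s \<noteq> U2) P) + 1"

definition marked_splits :: "nat \<Rightarrow> (step list \<times> step list) set" where
  "marked_splits N = {(a, b). U2 \<notin> set a \<and> U2 \<notin> set b \<and> length a + length b + 1 = N \<and>
                              nonneg_from 0 a \<and> dyck_from (height a + 1) b}"

definition marked_prefixes :: "nat \<Rightarrow> step list set" where
  "marked_prefixes N = {a. length a < N \<and> U2 \<notin> set a \<and> nonneg_from 0 a}"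

lemma dyck_from_split:
  "dyck_from 0 (a @ U2 # b) \<longleftrightarrow> nonneg_from 0 a \<and> dyck_from (height a + 1) b"
  by (auto simp: dyck_from_def nonneg_from_append algebra_simps dest: nonneg_from_height)

lemma takeWhile_split: "z \<notin> set a \<Longrightarrow> takeWhile (\<lambda>s. s \<noteq> z) (a @ z # b) = a"
  by (subst takeWhile_append2) auto

lemma U2_pos_split: "U2 \<notin> set a \<Longrightarrow> U2_pos (a @ U2 # b) = length a + 1"
  by (simp add: U2_pos_def takeWhile_split)

lemma marked_paths_eq_image: "marked_paths N = (\<lambda>(a, b). a @ U2 # b) ` marked_splits N"
proof
  show "(\<lambda>(a, b). a @ U2 # b) ` marked_splits N \<subseteq> marked_paths N"
    by (auto simp: marked_splits_def marked_paths_def dyck_from_split count_list_0_iff[symmetric])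
next
  show "marked_paths N \<subseteq> (\<lambda>(a, b). a @ U2 # b) ` marked_splits N"
  proof
    fix P
    assume P: "P \<in> marked_paths N"
    then have one: "count_list P U2 = 1" by (simp add: marked_paths_def)
    then have "U2 \<in> set P" using count_list_0_iff[of P U2] by auto
    then obtain a b where ab: "P = a @ U2 # b" "U2 \<notin> set a" using split_list_first by metis
    have "U2 \<notin> set b"
      using one ab count_list_0_iff[of a U2] count_list_0_iff[of b U2] by simp
    then have "(a, b) \<in> marked_splits N"
      using P ab by (auto simp: marked_splits_def marked_paths_def dyck_from_split)
    then show "P \<in> (\<lambda>(a, b). a @ U2 # b) ` marked_splits N" using ab by force
  qed
qed

lemma inj_on_marked_splits: "inj_on (\<lambda>(a, b). a @ U2 # b) (marked_splits N)"
proof (rule inj_onI, clarify)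
  fix a b a' b'
  assume "(a, b) \<in> marked_splits N" "(a', b') \<in> marked_splits N" and eq: "a @ U2 # b = a' @ U2 # b'"
  then have "U2 \<notin> set a" "U2 \<notin> set a'" by (auto simp: marked_splits_def)
  then have "a = a'" using takeWhile_split[of U2 a b] takeWhile_split[of U2 a' b'] eq by simp
  then show "a = a' \<and> b = b'" using eq by simp
qed

lemma finite_marked_prefixes: "finite (marked_prefixes N)"
  by (rule finite_subset[OF _ finite_step_lists_le[of N]]) (auto simp: marked_prefixes_def)

lemma marked_splits_eq_Sigma:
  "marked_splits N = Sigma (marked_prefixes N) (\<lambda>a. return_paths (N - 1 - length a) (height a + 1))"
  by (auto simp: marked_splits_def marked_prefixes_def return_paths_def)

lemma finite_marked_paths: "finite (marked_paths N)"
  unfolding marked_paths_eq_image marked_splits_eq_Sigma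
  by (intro finite_imageI finite_SigmaI finite_marked_prefixes finite_return_paths)

lemma U2_pos_le: "P \<in> marked_paths N \<Longrightarrow> U2_pos P \<le> N"
  unfolding marked_paths_eq_image by (auto simp: marked_splits_def U2_pos_split)

lemma marked_paths_odd: "odd N \<Longrightarrow> marked_paths N = {}"
  using even_length_plus_height by (fastforce simp: marked_paths_def dyck_from_def)

lemma sum_marked_paths_by_prefix:
  "(\<Sum>P\<in>marked_paths N. x ^ U2_pos P) =
     (\<Sum>a\<in>marked_prefixes N. of_nat (card (return_paths (N - 1 - length a) (height a + 1))) * x ^ (length a + 1))"
  for x :: "'a::comm_semiring_1"
proof -
  have "(\<Sum>P\<in>marked_paths N. x ^ U2_pos P) = (\<Sum>(a, b)\<in>marked_splits N. x ^ (length a + 1))"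
    unfolding marked_paths_eq_image
    by (subst sum.reindex[OF inj_on_marked_splits])
       (auto intro!: sum.cong simp: marked_splits_def U2_pos_split)
  also have "\<dots> = (\<Sum>a\<in>marked_prefixes N. \<Sum>b\<in>return_paths (N - 1 - length a) (height a + 1). x ^ (length a + 1))"
    unfolding marked_splits_eq_Sigma
    by (subst sum.Sigma) (auto simp: finite_marked_prefixes finite_return_paths)
  finally show ?thesis by simp
qed

lemma sum_marked_paths:
  "(\<Sum>P\<in>marked_paths N. x ^ U2_pos P) =
     (\<Sum>l<N. \<Sum>k<N. of_nat (card (return_paths l (int k))) *
                     of_nat (card (return_paths (N - 1 - l) (int k + 1))) * x ^ (l + 1))"
  for x :: "'a::comm_semiring_1"
proof -
  let ?term = "\<lambda>a. of_nat (card (return_paths (N - 1 - length a) (height a + 1))) * x ^ (length a + 1)"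
  have img: "(\<lambda>a. (length a, nat (height a))) ` marked_prefixes N \<subseteq> {..<N} \<times> {..<N}"
  proof (clarsimp simp: marked_prefixes_def)
    fix a :: "step list"
    assume "length a < N"
    then show "nat (height a) < N" using height_le_length[of a] by linarith
  qed
  have "(\<Sum>a\<in>marked_prefixes N. ?term a) =
      (\<Sum>y\<in>{..<N} \<times> {..<N}. \<Sum>a\<in>{a \<in> marked_prefixes N. (length a, nat (height a)) = y}. ?term a)"
    by (rule sum.group[symmetric]) (simp_all add: finite_marked_prefixes img)
  also have "\<dots> = (\<Sum>(l, k)\<in>{..<N} \<times> {..<N}. of_nat (card (rise_paths l (int k))) *
                     of_nat (card (return_paths (N - 1 - l) (int k + 1))) * x ^ (l + 1))"
  proof (rule sum.cong[OF refl], clarify)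
    fix l k
    assume "l < N" "k < N"
    then have "{a \<in> marked_prefixes N. (length a, nat (height a)) = (l, k)} = rise_paths l (int k)"
      by (auto simp: marked_prefixes_def rise_paths_def dest: nonneg_from_height)
    then show "(\<Sum>a\<in>{a \<in> marked_prefixes N. (length a, nat (height a)) = (l, k)}. ?term a) =
        of_nat (card (rise_paths l (int k))) * of_nat (card (return_paths (N - 1 - l) (int k + 1))) * x ^ (l + 1)"
      by (simp add: rise_paths_def mult.assoc)
  qed
  finally show ?thesis
    by (simp add: sum_marked_paths_by_prefix sum.cartesian_product card_rise_paths)
qed

definition marked_fps_len :: "'a::idom \<Rightarrow> 'a fps" where
  "marked_fps_len x = Abs_fps (\<lambda>N. \<Sum>P\<in>marked_paths N. x ^ U2_pos P)"

definition marked_kernel_len :: "'a::idom \<Rightarrow> 'a fps" where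
  "marked_kernel_len x = fps_X * (fps_const x * fps_X * (dyck_fps oo (fps_const x * fps_X)) * dyck_fps)"

text \<open>A marked path \<open>a U2 b\<close> whose prefix \<open>a\<close> ends at height \<open>k\<close> contributes
  \<open>(x t)\<^sup>k D(x t)\<^bsup>k+1\<^esup> \<cdot> x t \<cdot> t\<^bsup>k+1\<^esup> D(t)\<^bsup>k+2\<^esup>\<close>, with \<open>D = dyck_fps\<close>.\<close>
lemma marked_kernel_len_power_mult_dyck:
  "fps_const x * fps_X * (((fps_X ^ k * dyck_fps ^ Suc k) oo (fps_const x * fps_X)) *
     (fps_X ^ Suc k * dyck_fps ^ Suc (Suc k))) = marked_kernel_len x ^ Suc k * (dyck_fps :: 'a::idom fps)"
proof -
  have q0: "(fps_const x * fps_X :: 'a fps) $ 0 = 0" by simp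
  have "(fps_X ^ k * dyck_fps ^ Suc k) oo (fps_const x * fps_X) =
        (fps_const x * fps_X) ^ k * (dyck_fps oo (fps_const x * fps_X)) ^ Suc k"
    by (simp only: fps_compose_mult_distrib[OF q0] fps_compose_power[OF q0, symmetric]
        fps_X_fps_compose_startby0[OF q0])
  then show ?thesis
    by (simp add: marked_kernel_len_def power_mult_distrib algebra_simps)
qed

lemma coeff_marked_kernel_len_power:
  "(marked_kernel_len x ^ Suc k * (dyck_fps :: 'a::idom fps)) $ Suc M =
     (\<Sum>l<Suc M. of_nat (card (return_paths l (int k))) *
                of_nat (card (return_paths (Suc M - 1 - l) (int k + 1))) * x ^ (l + 1))"
proof -
  let ?F = "fps_X ^ k * (dyck_fps :: 'a fps) ^ Suc k"
    and ?G = "fps_X ^ Suc k * (dyck_fps :: 'a fps) ^ Suc (Suc k)"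
  have "(marked_kernel_len x ^ Suc k * (dyck_fps :: 'a fps)) $ Suc M = x * (((?F oo (fps_const x * fps_X)) * ?G) $ M)"
    unfolding marked_kernel_len_power_mult_dyck[symmetric]
    by (simp only: mult.assoc fps_mult_left_const_nth fps_X_mult_nth Suc_not_Zero if_False diff_Suc_1)
  also have "\<dots> = x * (\<Sum>l=0..M. (x ^ l * ?F $ l) * ?G $ (M - l))"
    by (simp only: fps_mult_nth fps_nth_compose_linear)
  also have "\<dots> = x * (\<Sum>l=0..M. (x ^ l * of_nat (card (return_paths l (int k)))) *
                       of_nat (card (return_paths (M - l) (int (Suc k)))))"
    by (simp only: card_return_paths_eq_coeff)
  also have "\<dots> = (\<Sum>l<Suc M. of_nat (card (return_paths l (int k))) *
                     of_nat (card (return_paths (Suc M - 1 - l) (int k + 1))) * x ^ (l + 1))"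
    by (simp add: sum_distrib_left atLeast0AtMost lessThan_Suc_atMost algebra_simps)
  finally show ?thesis .
qed

lemma marked_fps_len_nth:
  "marked_fps_len x $ N = (\<Sum>k<N. (marked_kernel_len x ^ Suc k * (dyck_fps :: 'a::idom fps)) $ N)"
proof (cases N)
  case 0
  have "marked_paths 0 = {}" by (auto simp: marked_paths_def)
  then show ?thesis by (simp add: marked_fps_len_def 0)
next
  case (Suc M)
  let ?c = "\<lambda>l k. of_nat (card (return_paths l (int k))) *
                  of_nat (card (return_paths (N - 1 - l) (int k + 1))) * x ^ (l + 1)"
  have "marked_fps_len x $ N = (\<Sum>l<N. \<Sum>k<N. ?c l k)"
    by (simp add: marked_fps_len_def sum_marked_paths)
  also have "\<dots> = (\<Sum>k<N. \<Sum>l<N. ?c l k)"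
    by (rule sum.swap)
  also have "\<dots> = (\<Sum>k<N. (marked_kernel_len x ^ Suc k * dyck_fps) $ N)"
    by (simp only: Suc coeff_marked_kernel_len_power)
  finally show ?thesis .
qed

lemma fps_geometric_series_eq:
  fixes V c G :: "'a::idom fps"
  assumes G: "\<And>N. G $ N = (\<Sum>k<N. ((fps_X * V) ^ (k + 1) * c) $ N)"
  shows "(1 - fps_X * V) * G = fps_X * V * c"
proof -
  define S where "S M = (\<Sum>k<M. (fps_X * V) ^ (k + 1) * c)" for M
  have vanish: "((fps_X * V) ^ (k + 1) * c) $ N = 0" if "N \<le> k" for k N
  proof -
    have "(fps_X * V) ^ (k + 1) * c = fps_X ^ (k + 1) * (V ^ (k + 1) * c)"
      by (simp add: power_mult_distrib algebra_simps)
    then have "((fps_X * V) ^ (k + 1) * c) $ N = (fps_X ^ (k + 1) * (V ^ (k + 1) * c)) $ N"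
      by (rule arg_cong)
    then show ?thesis using that by (simp only: fps_X_power_mult_nth) simp
  qed
  have G_S: "G $ N = S M $ N" if "N < M" for N M
  proof -
    have "S M $ N = (\<Sum>k<M. ((fps_X * V) ^ (k + 1) * c) $ N)" by (simp add: S_def fps_sum_nth)
    also have "\<dots> = (\<Sum>k<N. ((fps_X * V) ^ (k + 1) * c) $ N)"
      by (rule sum.mono_neutral_right) (use that vanish in auto)
    finally show ?thesis using G by simp
  qed
  have S_tel: "(1 - fps_X * V) * S M = fps_X * V * c - (fps_X * V) ^ (M + 1) * c" for M
  proof -
    have "S M = fps_X * V * c * (\<Sum>k<M. (fps_X * V) ^ k)"
      unfolding S_def sum_distrib_left by (rule sum.cong) (simp_all add: mult_ac)
    then have "(1 - fps_X * V) * S M = fps_X * V * c * (1 - (fps_X * V) ^ M)"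
      unfolding one_diff_power_eq by (simp only: mult_ac)
    then show ?thesis by (simp add: algebra_simps)
  qed
  show ?thesis
  proof (rule fps_ext)
    fix N
    have "((1 - fps_X * V) * G) $ N = (\<Sum>i=0..N. (1 - fps_X * V) $ i * G $ (N - i))"
      by (rule fps_mult_nth)
    also have "\<dots> = (\<Sum>i=0..N. (1 - fps_X * V) $ i * S (N + 1) $ (N - i))"
      by (rule sum.cong[OF refl]) (simp add: G_S)
    also have "\<dots> = ((1 - fps_X * V) * S (N + 1)) $ N"
      by (rule fps_mult_nth[symmetric])
    also have "\<dots> = (fps_X * V * c) $ N"
      using vanish[of N "N + 1"] by (simp only: S_tel fps_sub_nth) simp
    finally show "((1 - fps_X * V) * G) $ N = (fps_X * V * c) $ N" .
  qed
qed

lemma marked_fps_len_eq: "(1 - marked_kernel_len x) * marked_fps_len x = marked_kernel_len x * (dyck_fps :: 'a::idom fps)"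
  unfolding marked_kernel_len_def by (rule fps_geometric_series_eq) (simp add: marked_fps_len_nth[unfolded marked_kernel_len_def])

definition marked_fps :: "'a::idom \<Rightarrow> 'a fps" where
  "marked_fps x = Abs_fps (\<lambda>n. \<Sum>P\<in>marked_paths (2 * n). x ^ U2_pos P)"

definition catalan_at :: "'a::idom \<Rightarrow> 'a fps" where
  "catalan_at c = catalan_fps oo (fps_const c * fps_X)"

definition marked_kernel :: "'a::idom \<Rightarrow> 'a fps" where
  "marked_kernel x = fps_const x * fps_X * catalan_at (x ^ 2) * catalan_fps"

lemma marked_fps_len_eq_compose: "marked_fps_len x = marked_fps x oo fps_X ^ 2"
  by (rule fps_ext) (auto simp: fps_compose_X2_nth marked_fps_len_def marked_fps_def marked_paths_odd)

lemma catalan_at_eq: "catalan_at c = 1 + fps_const c * fps_X * (catalan_at c :: 'a::idom fps) ^ 2"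
proof -
  have q0: "(fps_const c * fps_X :: 'a fps) $ 0 = 0" by simp
  have "catalan_at c = (1 + fps_X * catalan_fps ^ 2) oo (fps_const c * fps_X :: 'a fps)"
    unfolding catalan_at_def by (subst catalan_fps_eq) simp
  also have "\<dots> = 1 + fps_const c * fps_X * catalan_at c ^ 2"
    by (simp add: fps_compose_add_distrib fps_compose_mult_distrib[OF q0] fps_compose_power[OF q0]
        catalan_at_def)
  finally show ?thesis .
qed

lemma catalan_at_1: "catalan_at 1 = catalan_fps"
  by (rule fps_ext) (simp add: catalan_at_def)

lemma dyck_fps_compose_scale:
  "dyck_fps oo (fps_const x * fps_X) = catalan_at (x ^ 2) oo (fps_X ^ 2 :: 'a::idom fps)"
  by (rule fps_ext) (auto simp: fps_compose_X2_nth dyck_fps_def catalan_at_def power_mult[symmetric])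

lemma marked_kernel_len_eq_compose: "marked_kernel_len x = marked_kernel x oo (fps_X ^ 2 :: 'a::idom fps)"
proof -
  have X2_0: "(fps_X ^ 2 :: 'a fps) $ 0 = 0" by simp
  have "marked_kernel x oo (fps_X ^ 2 :: 'a fps) =
        fps_const x * fps_X ^ 2 * (dyck_fps oo (fps_const x * fps_X)) * dyck_fps"
    unfolding marked_kernel_def
    by (simp only: fps_compose_mult_distrib[OF X2_0] fps_const_compose fps_X_fps_compose_startby0[OF X2_0]
        dyck_fps_compose_scale[symmetric] dyck_fps_def[symmetric])
  then show ?thesis by (simp add: marked_kernel_len_def power2_eq_square algebra_simps)
qed

theorem marked_fps_eq: "(1 - marked_kernel x) * marked_fps x = marked_kernel x * (catalan_fps :: 'a::idom fps)"
proof -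
  have "((1 - marked_kernel x) * marked_fps x - marked_kernel x * catalan_fps) oo fps_X ^ 2 =
        (1 - marked_kernel_len x) * marked_fps_len x - marked_kernel_len x * (dyck_fps :: 'a fps)"
    by (simp add: fps_compose_sub_distrib fps_compose_mult_distrib marked_kernel_len_eq_compose
        marked_fps_len_eq_compose dyck_fps_def)
  also have "\<dots> = 0 oo fps_X ^ 2"
    by (simp add: marked_fps_len_eq)
  finally show ?thesis using fps_compose_X2_inj by fastforce
qed

lemma marked_fps_1_eq: "(1 - 2 * fps_X * catalan_fps) * marked_fps 1 = fps_X * (catalan_fps :: 'a::idom fps) ^ 2"
proof -
  have k1: "marked_kernel 1 = fps_X * (catalan_fps :: 'a fps) ^ 2"
    by (simp add: marked_kernel_def catalan_at_1 power2_eq_square)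
  have c: "fps_X * catalan_fps ^ 2 = catalan_fps - (1 :: 'a fps)"
    using catalan_fps_eq by (metis add_diff_cancel_left')
  have "catalan_fps * (1 - 2 * fps_X * catalan_fps) = catalan_fps - 2 * (fps_X * (catalan_fps :: 'a fps) ^ 2)"
    by (simp add: algebra_simps power2_eq_square)
  also have "\<dots> = 1 - marked_kernel (1 :: 'a)"
    unfolding k1 c by (simp add: algebra_simps)
  finally have C: "catalan_fps * (1 - 2 * fps_X * catalan_fps) = 1 - marked_kernel (1 :: 'a)" .
  have "catalan_fps * ((1 - 2 * fps_X * catalan_fps) * marked_fps 1) = (1 - marked_kernel 1) * marked_fps (1 :: 'a)"
    by (simp only: mult.assoc[symmetric] C)
  also have "\<dots> = catalan_fps * (fps_X * catalan_fps ^ 2)"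
    unfolding marked_fps_eq unfolding k1 by (rule mult.commute)
  finally have "catalan_fps * ((1 - 2 * fps_X * catalan_fps) * marked_fps 1) =
                catalan_fps * (fps_X * (catalan_fps :: 'a fps) ^ 2)" .
  moreover have "(catalan_fps :: 'a fps) \<noteq> 0"
    using catalan_fps_nth_0 by (metis fps_zero_nth zero_neq_one)
  ultimately show ?thesis by simp
qed

lemma marked_nth_U2_iff:
  assumes "P \<in> marked_paths N" "i < length P"
  shows "P ! i = U2 \<longleftrightarrow> Suc i = U2_pos P"
proof -
  obtain a b where P: "P = a @ U2 # b" and ab: "U2 \<notin> set a" "U2 \<notin> set b"
    using assms(1) by (auto simp: marked_paths_eq_image marked_splits_def)
  consider "i < length a" | "i = length a" | "length a < i" by linarith
  then show ?thesis
  proof cases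
    case 1
    have "a ! i \<noteq> U2" using nth_mem[OF 1] ab(1) by auto
    then show ?thesis using 1 P ab by (simp add: nth_append U2_pos_split)
  next
    case 2
    then show ?thesis using ab P by (simp add: U2_pos_split)
  next
    case 3
    then obtain j where j: "i = Suc (length a + j)" "j < length b"
      using assms(2) P by (auto dest: less_imp_Suc_add)
    have "b ! j \<noteq> U2" using nth_mem[OF j(2)] ab(2) by auto
    then show ?thesis using j P ab by (simp add: nth_append U2_pos_split)
  qed
qed

lemma h_eq_card: "h n m = card {P \<in> marked_paths (2 * n). 1 \<le> m \<and> m \<le> U2_pos P}"
proof -
  have iff: "(\<exists>p. 1 \<le> p \<and> p \<le> length P \<and> P ! (p - 1) = U2 \<and> 1 \<le> m \<and> m \<le> p) \<longleftrightarrow>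
        1 \<le> m \<and> m \<le> U2_pos P" if P: "P \<in> marked_paths (2 * n)" for P
  proof -
    have pos: "1 \<le> U2_pos P" "U2_pos P \<le> length P"
      using U2_pos_le[OF P] P by (auto simp: U2_pos_def marked_paths_def)
    have "1 \<le> p \<Longrightarrow> p \<le> length P \<Longrightarrow> P ! (p - 1) = U2 \<longleftrightarrow> p = U2_pos P" for p
      using marked_nth_U2_iff[OF P, of "p - 1"] by auto
    then show ?thesis using pos by auto
  qed
  have "{P. bicolored_dyck P \<and> length P = 2 * n \<and> count_list P U2 = 1 \<and>
            (\<exists>p. 1 \<le> p \<and> p \<le> length P \<and> P ! (p - 1) = U2 \<and> 1 \<le> m \<and> m \<le> p)} =
        {P \<in> marked_paths (2 * n). \<exists>p. 1 \<le> p \<and> p \<le> length P \<and> P ! (p - 1) = U2 \<and> 1 \<le> m \<and> m \<le> p}"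
    by (auto simp: marked_paths_def bicolored_dyck_iff_dyck_from)
  also have "\<dots> = {P \<in> marked_paths (2 * n). 1 \<le> m \<and> m \<le> U2_pos P}"
    using iff by blast
  finally show ?thesis by (simp add: h_def)
qed

definition H_at :: "'a::idom \<Rightarrow> 'a fps" where
  "H_at x = Abs_fps (\<lambda>n. \<Sum>m\<le>2 * n. of_nat (h n m) * x ^ m)"

lemma H_at_nth: "H_at x $ n = (\<Sum>P\<in>marked_paths (2 * n). \<Sum>m=1..U2_pos P. x ^ m)"
proof -
  let ?S = "marked_paths (2 * n)"
  have "of_nat (h n m) * x ^ m = (\<Sum>P\<in>?S. if 1 \<le> m \<and> m \<le> U2_pos P then x ^ m else 0)" for m
  proof -
    have "of_nat (h n m) = (\<Sum>P\<in>{P \<in> ?S. 1 \<le> m \<and> m \<le> U2_pos P}. 1 :: 'a)"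
      by (simp add: h_eq_card)
    also have "\<dots> = (\<Sum>P\<in>?S. if 1 \<le> m \<and> m \<le> U2_pos P then 1 else 0)"
      by (rule sum.inter_filter[OF finite_marked_paths])
    finally show ?thesis
      by (simp add: sum_distrib_right if_distrib[of "\<lambda>v. v * x ^ m"] cong: if_cong)
  qed
  then have "H_at x $ n = (\<Sum>m\<le>2 * n. \<Sum>P\<in>?S. if 1 \<le> m \<and> m \<le> U2_pos P then x ^ m else 0)"
    by (simp add: H_at_def)
  also have "\<dots> = (\<Sum>P\<in>?S. \<Sum>m\<le>2 * n. if 1 \<le> m \<and> m \<le> U2_pos P then x ^ m else 0)"
    by (rule sum.swap)
  also have "\<dots> = (\<Sum>P\<in>?S. \<Sum>m=1..U2_pos P. x ^ m)"
  proof (rule sum.cong[OF refl])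
    fix P
    assume "P \<in> ?S"
    then have "{m \<in> {..2 * n}. 1 \<le> m \<and> m \<le> U2_pos P} = {1..U2_pos P}"
      using U2_pos_le by fastforce
    then show "(\<Sum>m\<le>2 * n. if 1 \<le> m \<and> m \<le> U2_pos P then x ^ m else 0) = (\<Sum>m=1..U2_pos P. x ^ m)"
      by (simp add: sum.inter_filter[symmetric])
  qed
  finally show ?thesis .
qed

lemma H_at_eq: "fps_const (1 - x) * H_at x = fps_const x * (marked_fps 1 - marked_fps (x :: 'a::idom))"
proof (rule fps_ext)
  fix n
  let ?S = "marked_paths (2 * n)"
  have "(fps_const (1 - x) * H_at x) $ n = (\<Sum>P\<in>?S. (1 - x) * (\<Sum>m=1..U2_pos P. x ^ m))"
    by (simp add: H_at_nth sum_distrib_left)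
  also have "\<dots> = (\<Sum>P\<in>?S. x - x ^ Suc (U2_pos P))"
  proof (rule sum.cong[OF refl])
    fix P
    have "1 \<le> U2_pos P" by (simp add: U2_pos_def)
    then show "(1 - x) * (\<Sum>m=1..U2_pos P. x ^ m) = x - x ^ Suc (U2_pos P)"
      using sum_gp_multiplied[of 1 "U2_pos P" x] by simp
  qed
  also have "\<dots> = x * ((\<Sum>P\<in>?S. 1 ^ U2_pos P) - (\<Sum>P\<in>?S. x ^ U2_pos P))"
    by (simp add: sum_subtractf sum_distrib_left right_diff_distrib)
  finally show "(fps_const (1 - x) * H_at x) $ n = (fps_const x * (marked_fps 1 - marked_fps x)) $ n"
    by (simp add: marked_fps_def)
qed

lemma H_fps_eq_H_at: "H_fps = H_at [:0, 1:]"
  unfolding H_fps_def H_at_def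
  by (intro arg_cong[where f = Abs_fps] ext sum.cong refl) (simp add: monom_altdef of_nat_poly)

lemma h_eq_0: "2 * n < m \<Longrightarrow> h n m = 0"
proof -
  assume "2 * n < m"
  then have "{P \<in> marked_paths (2 * n). 1 \<le> m \<and> m \<le> U2_pos P} = {}"
    by (force dest: U2_pos_le)
  then show ?thesis unfolding h_eq_card by (simp only: card.empty)
qed

section \<open>Convergence and the closed form\<close>

definition fps_radius_ge :: "real \<Rightarrow> real fps \<Rightarrow> bool" where
  "fps_radius_ge r f \<longleftrightarrow> ereal r \<le> fps_conv_radius f"

lemma fps_radius_geI_bound:
  assumes bound: "\<And>n. \<bar>f $ n\<bar> \<le> C ^ n" and r: "0 < r" "r * C < 1"
  shows "fps_radius_ge r f"
proof -
  have C: "0 \<le> C" using bound[of 1] by simp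
  have "summable (\<lambda>n. f $ n * r ^ n)"
  proof (rule summable_comparison_test')
    show "summable (\<lambda>n. (r * C) ^ n)"
      using r C by (intro summable_geometric) simp
    fix n
    show "norm (f $ n * r ^ n) \<le> (r * C) ^ n"
      using bound[of n] r by (simp add: abs_mult power_mult_distrib mult.commute mult_right_mono)
  qed
  then have "norm r \<le> conv_radius (fps_nth f)" by (rule conv_radius_geI)
  then show ?thesis using r by (simp add: fps_radius_ge_def fps_conv_radius_def)
qed

lemma fps_radius_ge_mult [simp]: "fps_radius_ge r f \<Longrightarrow> fps_radius_ge r g \<Longrightarrow> fps_radius_ge r (f * g)"
  unfolding fps_radius_ge_def by (rule order.trans[OF min.boundedI fps_conv_radius_mult])

lemma fps_radius_ge_add [simp]: "fps_radius_ge r f \<Longrightarrow> fps_radius_ge r g \<Longrightarrow> fps_radius_ge r (f + g)"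
  unfolding fps_radius_ge_def by (rule order.trans[OF min.boundedI fps_conv_radius_add])

lemma fps_radius_ge_diff [simp]: "fps_radius_ge r f \<Longrightarrow> fps_radius_ge r g \<Longrightarrow> fps_radius_ge r (f - g)"
  unfolding fps_radius_ge_def by (rule order.trans[OF min.boundedI fps_conv_radius_diff])

lemma fps_radius_ge_power [simp]: "fps_radius_ge r f \<Longrightarrow> fps_radius_ge r (f ^ n)"
  unfolding fps_radius_ge_def by (rule order.trans[OF _ fps_conv_radius_power])

lemma fps_radius_ge_const [simp]: "fps_radius_ge r (fps_const c)"
  and fps_radius_ge_1 [simp]: "fps_radius_ge r 1"
  and fps_radius_ge_numeral [simp]: "fps_radius_ge r (numeral k)"
  and fps_radius_ge_X [simp]: "fps_radius_ge r fps_X"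
  by (simp_all add: fps_radius_ge_def)

lemma fps_radius_ge_less: "fps_radius_ge r f \<Longrightarrow> \<bar>t\<bar> < r \<Longrightarrow> norm t < fps_conv_radius f"
  unfolding fps_radius_ge_def by (rule less_le_trans[of _ "ereal r"]) auto

lemma eval_fps_radius_ge:
  assumes "fps_radius_ge r f" "fps_radius_ge r g" "\<bar>t\<bar> < r"
  shows "eval_fps (f + g) t = eval_fps f t + eval_fps g t"
    and "eval_fps (f - g) t = eval_fps f t - eval_fps g t"
    and "eval_fps (f * g) t = eval_fps f t * eval_fps g t"
  using assms by (auto intro: eval_fps_add eval_fps_diff eval_fps_mult fps_radius_ge_less)

lemma eval_fps_power_radius_ge:
  "fps_radius_ge r f \<Longrightarrow> \<bar>t\<bar> < r \<Longrightarrow> eval_fps (f ^ n) t = eval_fps f t ^ n"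
  by (intro eval_fps_power fps_radius_ge_less)

lemma eval_fps_bounds:
  fixes f :: "real fps"
  assumes bound: "\<And>n. 0 \<le> f $ n \<and> f $ n \<le> C ^ n" and t: "0 \<le> t" "C * t < 1"
  shows "0 \<le> eval_fps f t \<and> eval_fps f t \<le> 1 / (1 - C * t)"
proof -
  have C: "0 \<le> C" using bound[of 1] by simp
  have le: "f $ n * t ^ n \<le> (C * t) ^ n" for n
    using bound[of n] t by (simp add: power_mult_distrib mult_right_mono)
  have geom: "summable (\<lambda>n. (C * t) ^ n)" using t C by (intro summable_geometric) simp
  have sum: "summable (\<lambda>n. f $ n * t ^ n)"
    by (rule summable_comparison_test'[OF geom]) (use bound t le in simp)
  have "eval_fps f t \<le> (\<Sum>n. (C * t) ^ n)"
    unfolding eval_fps_def using le sum geom by (rule suminf_le)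
  also have "\<dots> = 1 / (1 - C * t)" using t C by (intro suminf_geometric) simp
  finally show ?thesis
    unfolding eval_fps_def using sum bound t by (auto intro!: suminf_nonneg)
qed

lemma catalan_le: "catalan n \<le> 9 ^ n"
  using card_return_paths_le[of "2 * n" 0] by (simp add: catalan_eq_card_return_paths power_mult)

lemma card_marked_paths_le: "card (marked_paths N) \<le> 3 ^ N"
  unfolding card_step_lists[symmetric]
  by (rule card_mono[OF finite_step_lists]) (auto simp: marked_paths_def)

lemma catalan_at_coeff_bounds:
  "0 \<le> c \<Longrightarrow> c \<le> 1 \<Longrightarrow> 0 \<le> catalan_at c $ n \<and> catalan_at c $ n \<le> (9 :: real) ^ n"
proof -
  assume c: "0 \<le> c" "c \<le> 1"
  have "c ^ n * catalan n \<le> 1 * 9 ^ n"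
    using catalan_le[of n] c by (intro mult_mono power_le_one) (auto simp: of_nat_le_iff[symmetric])
  then show ?thesis using c by (simp add: catalan_at_def catalan_fps_def)
qed

lemma marked_fps_coeff_bounds:
  "0 \<le> y \<Longrightarrow> y \<le> 1 \<Longrightarrow> 0 \<le> marked_fps y $ n \<and> marked_fps y $ n \<le> (9 :: real) ^ n"
proof -
  assume y: "0 \<le> y" "y \<le> 1"
  have "(\<Sum>P\<in>marked_paths (2 * n). y ^ U2_pos P) \<le> (\<Sum>P\<in>marked_paths (2 * n). 1)"
    using y by (intro sum_mono) (simp add: power_le_one)
  also have "\<dots> \<le> 9 ^ n"
    using card_marked_paths_le[of "2 * n"] by (simp add: power_mult of_nat_le_iff[symmetric])
  finally show ?thesis using y by (simp add: marked_fps_def sum_nonneg)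
qed

lemma sqrt_one_minus_four_eq:
  fixes s c :: real
  assumes c: "c = 1 + s * c ^ 2" and pos: "0 \<le> 1 - 2 * s * c"
  shows "sqrt (1 - 4 * s) = 1 - 2 * s * c"
proof -
  have sc: "s * c ^ 2 = c - 1" using c by simp
  have "(1 - 2 * s * c) ^ 2 = 1 - 4 * s * c + 4 * s * (s * c ^ 2)"
    by (simp add: power2_eq_square algebra_simps)
  also have "\<dots> = 1 - 4 * s"
    unfolding sc by (simp add: algebra_simps)
  finally have "sqrt (1 - 4 * s) = sqrt ((1 - 2 * s * c) ^ 2)" by simp
  also have "\<dots> = 1 - 2 * s * c" using pos by simp
  finally show ?thesis .
qed

lemma H_closed_eq:
  fixes t x c a :: real
  assumes tx: "0 < t" "0 < x" and c: "c = 1 + t * c ^ 2" and a: "a = 1 + x ^ 2 * t * a ^ 2"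
    and sc: "0 \<le> 1 - 2 * t * c" and ra: "0 \<le> 1 - 2 * x ^ 2 * t * a"
  shows "H_closed t x = t * x * c * (x * a - c) / ((1 - x) * (1 - 2 * t * c) * (x * t * a * c - 1))"
proof -
  have s: "sqrt (1 - 4 * t) = 1 - 2 * t * c"
    by (rule sqrt_one_minus_four_eq[OF c sc])
  have r: "sqrt (1 - 4 * t * x ^ 2) = 1 - 2 * x ^ 2 * t * a"
    using sqrt_one_minus_four_eq[of a "x ^ 2 * t"] a ra by (simp add: mult_ac)
  have num: "x * (1 - (1 - 2 * t * c)) * (1 - x + x * (1 - 2 * t * c) - (1 - 2 * x ^ 2 * t * a)) =
             4 * t * x * (t * x * c * (x * a - c))"
    by (simp add: algebra_simps power2_eq_square)
  have den: "(1 - x) * (1 - 2 * t * c) * (1 - 4 * t * x + (1 - 2 * x ^ 2 * t * a) * (1 - 2 * t * c) -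
               (1 - 2 * t * c) - (1 - 2 * x ^ 2 * t * a)) =
             4 * t * x * ((1 - x) * (1 - 2 * t * c) * (x * t * a * c - 1))"
    by (simp add: algebra_simps power2_eq_square)
  show ?thesis
    unfolding H_closed_def s r num mult.assoc[symmetric, of "1 - x"] den
    using tx by (intro mult_divide_mult_cancel_left) simp
qed

lemma functional_equations_imp_H_closed:
  fixes t x c a A B :: real
  assumes tx: "0 < t" "0 < x" "x < 1" and c: "c = 1 + t * c ^ 2" and a: "a = 1 + x ^ 2 * t * a ^ 2"
    and sc: "0 < 1 - 2 * t * c" and ra: "0 \<le> 1 - 2 * x ^ 2 * t * a" and w: "x * t * a * c \<noteq> 1"
    and A: "(1 - 2 * t * c) * A = t * c ^ 2" and B: "(1 - x * t * a * c) * B = x * t * a * c * c"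
  shows "x / (1 - x) * (A - B) = H_closed t x"
proof -
  define s w where "s = 1 - 2 * t * c" and "w = x * t * a * c"
  have s0: "s \<noteq> 0" and w1: "1 - w \<noteq> 0" using sc w by (auto simp: s_def w_def)
  have key: "t * c ^ 2 * (1 - w) - w * c * s = t * c * (c - x * a)"
  proof -
    have z: "t * c ^ 2 - c + 1 = 0" using c by simp
    have "t * c ^ 2 * (1 - w) - w * c * s - t * c * (c - x * a) = c * (t * x * a * (t * c ^ 2 - c + 1))"
      by (simp add: w_def s_def algebra_simps power2_eq_square)
    then show ?thesis unfolding z by simp
  qed
  have A': "A = t * c ^ 2 / s" using A s0 by (simp add: s_def field_simps)
  have B': "B = w * c / (1 - w)" using B w1 by (simp add: w_def field_simps)
  have "A - B = t * c ^ 2 / s - w * c / (1 - w)"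
    by (simp add: A' B')
  also have "\<dots> = t * c * (c - x * a) / (s * (1 - w))"
    using s0 w1 key by (simp add: field_simps)
  finally have AB: "A - B = t * c * (c - x * a) / (s * (1 - w))" .
  have "(1 - x) * s * (w - 1) \<noteq> 0" "s * (1 - w) \<noteq> 0" "1 - x \<noteq> 0" using tx s0 w1 by auto
  then have "x / (1 - x) * (A - B) = t * x * c * (x * a - c) / ((1 - x) * s * (w - 1))"
    unfolding AB using s0 w1 by (simp add: field_simps)
  then show ?thesis
    using H_closed_eq[OF tx(1,2) c a] sc ra by (simp add: s_def w_def)
qed

lemma H_at_eq_field:
  "x \<noteq> 1 \<Longrightarrow> H_at x = fps_const (x / (1 - x)) * (marked_fps 1 - marked_fps (x :: 'a::field))"
proof -
  assume "x \<noteq> 1"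
  then have "H_at x = fps_const (1 / (1 - x)) * (fps_const (1 - x) * H_at x)"
    by (simp add: mult.assoc[symmetric])
  also have "\<dots> = fps_const (x / (1 - x)) * (marked_fps 1 - marked_fps x)"
    unfolding H_at_eq by (simp add: mult.assoc[symmetric])
  finally show ?thesis .
qed

lemma fps_radius_ge_catalan_at: "0 \<le> c \<Longrightarrow> c \<le> 1 \<Longrightarrow> fps_radius_ge (1 / 10) (catalan_at c)"
  by (rule fps_radius_geI_bound[where C = 9]) (use catalan_at_coeff_bounds in auto)

lemma fps_radius_ge_marked_fps: "0 \<le> y \<Longrightarrow> y \<le> 1 \<Longrightarrow> fps_radius_ge (1 / 10) (marked_fps y)"
  by (rule fps_radius_geI_bound[where C = 9]) (use marked_fps_coeff_bounds in auto)

lemma fps_radius_ge_H_at: "0 \<le> x \<Longrightarrow> x < 1 \<Longrightarrow> fps_radius_ge (1 / 10) (H_at x)"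
  by (simp add: H_at_eq_field fps_radius_ge_marked_fps)

lemma eval_catalan_at:
  fixes c t :: real
  assumes c: "0 \<le> c" "c \<le> 1" and t: "0 < t" "t < 1 / 18"
  shows "eval_fps (catalan_at c) t = 1 + c * t * eval_fps (catalan_at c) t ^ 2"
    and "0 \<le> eval_fps (catalan_at c) t" "eval_fps (catalan_at c) t \<le> 2"
proof -
  have ta: "\<bar>t\<bar> < 1 / 10" using t by simp
  have R: "fps_radius_ge (1 / 10) (catalan_at c)" using c by (rule fps_radius_ge_catalan_at)
  show "eval_fps (catalan_at c) t = 1 + c * t * eval_fps (catalan_at c) t ^ 2"
    by (subst catalan_at_eq) (simp add: eval_fps_radius_ge[OF _ _ ta] eval_fps_power_radius_ge[OF _ ta] R)
  have "0 \<le> eval_fps (catalan_at c) t \<and> eval_fps (catalan_at c) t \<le> 1 / (1 - 9 * t)"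
    using c t by (intro eval_fps_bounds catalan_at_coeff_bounds) auto
  moreover have "1 / (1 - 9 * t) \<le> 2" using t by (simp add: field_simps)
  ultimately show "0 \<le> eval_fps (catalan_at c) t" "eval_fps (catalan_at c) t \<le> 2" by linarith+
qed

lemma eval_H_at:
  fixes t x :: real
  assumes t: "0 < t" "t < 1 / 18" and x: "0 < x" "x < 1"
  shows "eval_fps (H_at x) t = H_closed t x"
proof -
  have ta: "\<bar>t\<bar> < 1 / 10" using t by simp
  have x2: "0 \<le> x ^ 2" "x ^ 2 \<le> 1" using x by (auto simp: power_le_one)
  define c a A B where "c = eval_fps catalan_fps t" and "a = eval_fps (catalan_at (x ^ 2)) t"
    and "A = eval_fps (marked_fps 1) t" and "B = eval_fps (marked_fps x) t"
  note R = fps_radius_ge_catalan_at[of 1, unfolded catalan_at_1] fps_radius_ge_catalan_at[OF x2]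
    fps_radius_ge_marked_fps[of 1] fps_radius_ge_marked_fps[of x]
  note ev = eval_fps_radius_ge[OF _ _ ta] eval_fps_power_radius_ge[OF _ ta]
  have c: "c = 1 + t * c ^ 2" "0 \<le> c" "c \<le> 2"
    using eval_catalan_at[of 1 t, unfolded catalan_at_1] t by (simp_all add: c_def)
  have a: "a = 1 + x ^ 2 * t * a ^ 2" "0 \<le> a" "a \<le> 2"
    using eval_catalan_at[OF x2 t] by (simp_all add: a_def)
  have "eval_fps ((1 - 2 * fps_X * catalan_fps) * marked_fps 1) t = eval_fps (fps_X * catalan_fps ^ 2) t"
    by (simp only: marked_fps_1_eq)
  then have A: "(1 - 2 * t * c) * A = t * c ^ 2"
    by (simp add: ev R A_def c_def)
  have "eval_fps ((1 - marked_kernel x) * marked_fps x) t = eval_fps (marked_kernel x * catalan_fps) t"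
    by (simp only: marked_fps_eq)
  then have B: "(1 - x * t * a * c) * B = x * t * a * c * c"
    using x by (simp add: ev R B_def a_def c_def marked_kernel_def)
  have "t * c \<le> 1 / 18 * 2" using t c by (intro mult_mono) auto
  moreover have "x ^ 2 * t * a \<le> 1 * (1 / 18) * 2" using x2 t a by (intro mult_mono) auto
  moreover have "x * t * a * c \<le> 1 * (1 / 18) * 2 * 2" using x t a c by (intro mult_mono) auto
  ultimately have "t * c \<le> 2 / 18" "x ^ 2 * t * a \<le> 2 / 18" "x * t * a * c \<le> 4 / 18" by simp_all
  then have "0 < 1 - 2 * t * c" "0 \<le> 1 - 2 * x ^ 2 * t * a" "x * t * a * c \<noteq> 1" by auto
  then have "x / (1 - x) * (A - B) = H_closed t x"
    using functional_equations_imp_H_closed[OF t(1) x c(1) a(1) _ _ _ A B] by simp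
  then show ?thesis
    using x by (simp add: H_at_eq_field ev R A_def B_def)
qed

lemma has_sum_h:
  fixes t x :: real
  assumes t: "0 \<le> t" "norm t < fps_conv_radius (H_at x)" and x: "0 \<le> x"
  shows "((\<lambda>(n, m). real (h n m) * t ^ n * x ^ m) has_sum eval_fps (H_at x) t) UNIV"
proof -
  let ?f = "\<lambda>(n, m). real (h n m) * t ^ n * x ^ m"
  have inner: "((\<lambda>m. ?f (n, m)) has_sum H_at x $ n * t ^ n) UNIV" for n
    by (rule has_sum_finite_neutralI[of "{..2 * n}"])
       (auto simp: h_eq_0 H_at_def sum_distrib_left sum_distrib_right mult_ac)
  have outer: "((\<lambda>n. H_at x $ n * t ^ n) has_sum eval_fps (H_at x) t) UNIV"
    using sums_eval_fps[OF t(2)] by (rule sums_nonneg_imp_has_sum) (simp add: H_at_def sum_nonneg t x)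
  have "?f summable_on UNIV \<times> UNIV"
    using inner has_sum_imp_summable[OF outer] by (rule summable_on_SigmaI) (simp add: t x)
  then show ?thesis using has_sum_SigmaI[OF inner outer] by simp
qed

section \<open>Biquadratic coordinates\<close>

text \<open>\<open>Quad a\<^sub>0 a\<^sub>1 a\<^sub>2 a\<^sub>3\<close> stands for \<open>a\<^sub>0 + a\<^sub>1 s + a\<^sub>2 r + a\<^sub>3 s r\<close> in the algebra generated over the
  coefficients by two elements with \<open>s\<^sup>2 = u\<close> and \<open>r\<^sup>2 = v\<close>.\<close>
datatype 'a quad = Quad (q0: 'a) (q1: 'a) (q2: 'a) (q3: 'a)

fun quad_mult :: "'a::comm_ring_1 \<Rightarrow> 'a \<Rightarrow> 'a quad \<Rightarrow> 'a quad \<Rightarrow> 'a quad" where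
  "quad_mult u v (Quad a0 a1 a2 a3) (Quad b0 b1 b2 b3) =
     Quad (a0 * b0 + a1 * b1 * u + a2 * b2 * v + a3 * b3 * u * v)
          (a0 * b1 + a1 * b0 + (a2 * b3 + a3 * b2) * v)
          (a0 * b2 + a2 * b0 + (a1 * b3 + a3 * b1) * u)
          (a0 * b3 + a3 * b0 + a1 * b2 + a2 * b1)"

fun quad_add :: "'a::comm_ring_1 quad \<Rightarrow> 'a quad \<Rightarrow> 'a quad" where
  "quad_add (Quad a0 a1 a2 a3) (Quad b0 b1 b2 b3) = Quad (a0 + b0) (a1 + b1) (a2 + b2) (a3 + b3)"

fun quad_diff :: "'a::comm_ring_1 quad \<Rightarrow> 'a quad \<Rightarrow> 'a quad" where
  "quad_diff (Quad a0 a1 a2 a3) (Quad b0 b1 b2 b3) = Quad (a0 - b0) (a1 - b1) (a2 - b2) (a3 - b3)"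

definition quad_const :: "'a::comm_ring_1 \<Rightarrow> 'a quad" where
  "quad_const c = Quad c 0 0 0"

definition quad_s :: "'a::comm_ring_1 quad" where
  "quad_s = Quad 0 1 0 0"

definition quad_r :: "'a::comm_ring_1 quad" where
  "quad_r = Quad 0 0 1 0"

fun conj_s :: "'a::comm_ring_1 quad \<Rightarrow> 'a quad" where
  "conj_s (Quad a0 a1 a2 a3) = Quad a0 (- a1) a2 (- a3)"

fun conj_r :: "'a::comm_ring_1 quad \<Rightarrow> 'a quad" where
  "conj_r (Quad a0 a1 a2 a3) = Quad a0 a1 (- a2) (- a3)"

fun quad_eval :: "('a \<Rightarrow> 'b::comm_ring_1) \<Rightarrow> 'b \<Rightarrow> 'b \<Rightarrow> 'a quad \<Rightarrow> 'b" where
  "quad_eval f S R (Quad a0 a1 a2 a3) = f a0 + f a1 * S + f a2 * R + f a3 * S * R"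

lemma quad_eval_sel: "quad_eval f S R p = f (q0 p) + f (q1 p) * S + f (q2 p) * R + f (q3 p) * S * R"
  by (cases p) simp

lemma quad_mult_conj_s: "q1 (quad_mult u v p (conj_s p)) = 0 \<and> q3 (quad_mult u v p (conj_s p)) = 0"
  by (cases p) (auto simp: algebra_simps)

lemma quad_mult_conj_r:
  "quad_mult u v (conj_r (Quad a0 0 a2 0)) (Quad a0 0 a2 0) = Quad (a0 * a0 - a2 * a2 * v) 0 0 0"
  by (simp add: algebra_simps)

locale comm_ring_hom =
  fixes f :: "'a::comm_ring_1 \<Rightarrow> 'b::comm_ring_1"
  assumes hom_add: "f (x + y) = f x + f y"
    and hom_mult: "f (x * y) = f x * f y"
    and hom_one: "f 1 = 1"
begin

lemma hom_zero: "f 0 = 0"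
  using hom_add[of 0 0] by simp

lemma hom_uminus: "f (- x) = - f x"
  using hom_add[of x "- x"] hom_zero by (simp add: eq_neg_iff_add_eq_0 add.commute)

lemma hom_diff: "f (x - y) = f x - f y"
  using hom_add[of x "- y"] hom_uminus by simp

lemma hom_sum: "f (sum g A) = (\<Sum>a\<in>A. f (g a))"
  by (induction A rule: infinite_finite_induct) (simp_all add: hom_zero hom_add)

lemma map_poly_hom_add: "map_poly f (p + q) = map_poly f p + map_poly f q"
  by (rule poly_eqI) (simp add: coeff_map_poly hom_zero hom_add)

lemma map_poly_hom_diff: "map_poly f (p - q) = map_poly f p - map_poly f q"
  by (rule poly_eqI) (simp add: coeff_map_poly hom_zero hom_diff)

lemma map_poly_hom_mult: "map_poly f (p * q) = map_poly f p * map_poly f q"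
  by (rule poly_eqI) (simp add: coeff_map_poly coeff_mult hom_zero hom_sum hom_mult)

lemma map_poly_hom_power: "map_poly f (p ^ n) = map_poly f p ^ n"
  by (induction n) (simp_all add: map_poly_hom_mult hom_one)

lemma map_poly_hom_pCons: "map_poly f (pCons c p) = pCons (f c) (map_poly f p)"
  by (rule map_poly_pCons) (rule hom_zero)

lemma map_poly_hom_smult: "map_poly f (smult c p) = smult (f c) (map_poly f p)"
  by (rule map_poly_smult) (simp_all add: hom_zero hom_mult)

lemma quad_eval_mult:
  assumes "S * S = f u" "R * R = f v"
  shows "quad_eval f S R (quad_mult u v p q) = quad_eval f S R p * quad_eval f S R q"
proof (cases p; cases q)
  fix a0 a1 a2 a3 b0 b1 b2 b3
  assume pq: "p = Quad a0 a1 a2 a3" "q = Quad b0 b1 b2 b3"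
  show ?thesis
    unfolding pq by (simp add: hom_add hom_mult assms[symmetric]) (simp add: algebra_simps)
qed

lemma quad_eval_add: "quad_eval f S R (quad_add p q) = quad_eval f S R p + quad_eval f S R q"
  by (cases p; cases q) (simp add: hom_add algebra_simps)

lemma quad_eval_diff: "quad_eval f S R (quad_diff p q) = quad_eval f S R p - quad_eval f S R q"
  by (cases p; cases q) (simp add: hom_diff algebra_simps)

lemma quad_eval_const: "quad_eval f S R (quad_const c) = f c"
  by (simp add: quad_const_def hom_zero)

lemma quad_eval_s: "quad_eval f S R quad_s = S"
  by (simp add: quad_s_def hom_zero hom_one)

lemma quad_eval_r: "quad_eval f S R quad_r = R"
  by (simp add: quad_r_def hom_zero hom_one)

lemma map_quad_mult: "map_quad f (quad_mult u v p q) = quad_mult (f u) (f v) (map_quad f p) (map_quad f q)"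
  by (cases p; cases q) (simp add: hom_add hom_mult)

lemma map_quad_add: "map_quad f (quad_add p q) = quad_add (map_quad f p) (map_quad f q)"
  by (cases p; cases q) (simp add: hom_add)

lemma map_quad_diff: "map_quad f (quad_diff p q) = quad_diff (map_quad f p) (map_quad f q)"
  by (cases p; cases q) (simp add: hom_diff)

lemma map_quad_const: "map_quad f (quad_const c) = quad_const (f c)"
  by (simp add: quad_const_def hom_zero)

lemma map_quad_s: "map_quad f quad_s = quad_s"
  by (simp add: quad_s_def hom_zero hom_one)

lemma map_quad_r: "map_quad f quad_r = quad_r"
  by (simp add: quad_r_def hom_zero hom_one)

lemma map_quad_conj_s: "map_quad f (conj_s p) = conj_s (map_quad f p)"
  by (cases p) (simp add: hom_uminus)

lemma map_quad_conj_r: "map_quad f (conj_r p) = conj_r (map_quad f p)"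
  by (cases p) (simp add: hom_uminus)

lemma poly_map_poly_quad_eval:
  "\<exists>z. \<forall>S R. S * S = f u \<longrightarrow> R * R = f v \<longrightarrow>
         poly (map_poly f P) (quad_eval f S R q) = quad_eval f S R z"
proof (induction P rule: pCons_induct)
  case 0
  show ?case by (intro exI[of _ "Quad 0 0 0 0"]) (simp add: hom_zero)
next
  case (pCons c P)
  then obtain z where z: "\<forall>S R. S * S = f u \<longrightarrow> R * R = f v \<longrightarrow>
                              poly (map_poly f P) (quad_eval f S R q) = quad_eval f S R z"
    by blast
  show ?case
  proof (intro exI[of _ "quad_add (quad_const c) (quad_mult u v q z)"] allI impI)
    fix S R
    assume "S * S = f u" "R * R = f v"
    then show "poly (map_poly f (pCons c P)) (quad_eval f S R q) =
               quad_eval f S R (quad_add (quad_const c) (quad_mult u v q z))"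
      using z by (simp add: map_poly_hom_pCons quad_eval_add quad_eval_const quad_eval_mult)
  qed
qed

end

section \<open>The quartic equation\<close>

type_synonym tpoly = "rat poly poly"

definition one_minus_4t :: tpoly where
  "one_minus_4t = [:1, -4:]"

definition one_minus_4x2t :: tpoly where
  "one_minus_4x2t = [:1, [:0, 0, -4:]:]"

definition sqrt_1_4t :: "rat poly fps" where
  "sqrt_1_4t = 1 - 2 * fps_X * catalan_fps"

definition sqrt_1_4x2t :: "rat poly fps" where
  "sqrt_1_4x2t = 1 - 2 * fps_const ([:0, 1:] ^ 2) * fps_X * catalan_at ([:0, 1:] ^ 2)"

lemma sqrt_1_4t_sq: "sqrt_1_4t * sqrt_1_4t = fps_of_poly one_minus_4t"
proof -
  have C: "fps_X * catalan_fps ^ 2 = catalan_fps - (1 :: rat poly fps)"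
    using catalan_fps_eq by (metis add_diff_cancel_left')
  have "sqrt_1_4t * sqrt_1_4t = 1 - 4 * fps_X * catalan_fps + 4 * fps_X * (fps_X * catalan_fps ^ 2)"
    by (simp add: sqrt_1_4t_def algebra_simps power2_eq_square)
  also have "\<dots> = 1 - 4 * fps_X"
    unfolding C by (simp add: algebra_simps)
  also have "1 - 4 * fps_X = fps_of_poly one_minus_4t"
    by (simp add: one_minus_4t_def fps_of_poly_pCons fps_numeral_fps_const[symmetric] algebra_simps)
  finally show ?thesis .
qed

lemma sqrt_1_4x2t_sq: "sqrt_1_4x2t * sqrt_1_4x2t = fps_of_poly one_minus_4x2t"
proof -
  let ?c = "[:0, 1:] ^ 2 :: rat poly"
  have C: "fps_const ?c * fps_X * catalan_at ?c ^ 2 = catalan_at ?c - 1"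
    using catalan_at_eq[of ?c] by (metis add_diff_cancel_left')
  have "sqrt_1_4x2t * sqrt_1_4x2t =
        1 - 4 * fps_const ?c * fps_X * catalan_at ?c + 4 * fps_const ?c * fps_X * (fps_const ?c * fps_X * catalan_at ?c ^ 2)"
    by (simp add: sqrt_1_4x2t_def algebra_simps power2_eq_square)
  also have "\<dots> = 1 - 4 * fps_const ?c * fps_X"
    unfolding C by (simp add: algebra_simps)
  also have "\<dots> = fps_of_poly one_minus_4x2t"
  proof -
    have "[:0, 0, -4:] = - 4 * ?c" by (simp add: numeral_poly power2_eq_square)
    then show ?thesis
      by (simp add: one_minus_4x2t_def fps_of_poly_pCons fps_numeral_fps_const algebra_simps)
  qed
  finally show ?thesis .
qed

lemma sq_eq_sq_mult_odd_degree:
  fixes p q w :: "'a::idom poly"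
  assumes "p ^ 2 = q ^ 2 * w" "odd (degree w)"
  shows "q = 0"
proof (rule ccontr)
  assume q: "q \<noteq> 0"
  have w: "w \<noteq> 0" using assms(2) by auto
  then have p: "p \<noteq> 0" using assms(1) q by auto
  have "2 * degree p = 2 * degree q + degree w"
    using arg_cong[OF assms(1), of degree] p q w by (simp add: degree_mult_eq degree_power_eq)
  then show False using assms(2) by presburger
qed

lemma sq_eq_sq_mult_odd_order:
  fixes p q w :: "'a::idom poly"
  assumes "p ^ 2 = q ^ 2 * w" "w \<noteq> 0" "odd (order z w)"
  shows "q = 0"
proof (rule ccontr)
  assume q: "q \<noteq> 0"
  then have p: "p \<noteq> 0" using assms(1,2) by auto
  have "2 * order z p = 2 * order z q + order z w"
    using arg_cong[OF assms(1), of "order z"] p q assms(2) by (simp add: power2_eq_square order_mult)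
  then show False using assms(3) by presburger
qed

lemma order_1_one_minus_sq: "order 1 [:1, 0, -1 :: rat:] = 1"
proof -
  have "[:1, 0, -1 :: rat:] = [:-1, 1:] * [:-1, -1:]" by simp
  moreover have "order 1 [:-1, 1 :: rat:] = 1" using order_power_n_n[of "1 :: rat" 1] by simp
  moreover have "order 1 [:-1, -1 :: rat:] = 0" by (rule order_0I) simp
  ultimately show ?thesis by (simp only:) (subst order_mult, auto)
qed

lemma one_minus_4t_dvd: "poly a [:1 / 4:] = 0 \<Longrightarrow> \<exists>a'. a = one_minus_4t * a'"
proof -
  assume "poly a [:1 / 4:] = 0"
  then obtain q where q: "a = [:- [:1 / 4:], 1:] * q" by (auto simp: poly_eq_0_iff_dvd)
  have "[:- [:1 / 4:], 1:] = one_minus_4t * [:[:- 1 / 4:]:]"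
    by (simp add: one_minus_4t_def numeral_poly one_pCons)
  then show ?thesis using q by (metis mult.assoc)
qed

lemma length_coeffs_one_minus_4t_mult:
  "length (coeffs (one_minus_4t * a)) = (if a = 0 then 0 else length (coeffs a) + 1)"
proof -
  have "one_minus_4t \<noteq> 0" "degree one_minus_4t = 1" by (simp_all add: one_minus_4t_def)
  then show ?thesis by (simp add: length_coeffs degree_mult_eq)
qed

text \<open>The two identities are the coordinates of \<open>(a + b s)\<^sup>2 = (c + d s)\<^sup>2 v\<close> with \<open>s\<^sup>2 = u\<close>,
  \<open>u = 1 - 4t\<close>, \<open>v = 1 - 4x\<^sup>2t\<close>. At \<open>t = 1/4\<close> the first one reads \<open>A\<^sup>2 = C\<^sup>2 (1 - x\<^sup>2)\<close>,
  which forces \<open>A = C = 0\<close>; so \<open>u\<close> divides \<open>a\<close> and \<open>c\<close>, and dividing out gives a smaller solution.\<close>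
lemma one_minus_4x2t_not_square:
  fixes a b c d :: tpoly
  shows "a ^ 2 + b ^ 2 * one_minus_4t = (c ^ 2 + d ^ 2 * one_minus_4t) * one_minus_4x2t \<Longrightarrow>
         a * b = c * d * one_minus_4x2t \<Longrightarrow> a = 0 \<and> b = 0 \<and> c = 0 \<and> d = 0"
proof (induction "length (coeffs a) + length (coeffs b) + length (coeffs c) + length (coeffs d)"
    arbitrary: a b c d rule: less_induct)
  case less
  note eq1 = less.prems(1) and eq2 = less.prems(2)
  have u0: "one_minus_4t \<noteq> 0" by (simp add: one_minus_4t_def)
  show ?case
  proof (cases "a = 0 \<and> c = 0")
    case True
    then have "b ^ 2 * one_minus_4t = (d ^ 2 * one_minus_4x2t) * one_minus_4t"
      using eq1 by (simp add: algebra_simps)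
    then have bd: "b ^ 2 = d ^ 2 * one_minus_4x2t" using u0 by simp
    then have "d = 0" by (rule sq_eq_sq_mult_odd_degree) (simp add: one_minus_4x2t_def)
    then show ?thesis using True bd by simp
  next
    case False
    let ?A = "poly a [:1 / 4:]" and ?C = "poly c [:1 / 4:]"
    have "?A ^ 2 = ?C ^ 2 * [:1, 0, -1:]"
      using arg_cong[OF eq1, of "\<lambda>p. poly p [:1 / 4:]"]
      by (simp add: one_minus_4t_def one_minus_4x2t_def numeral_poly one_pCons)
    moreover from this have "?C = 0"
      by (rule sq_eq_sq_mult_odd_order[where z = 1]) (simp_all add: order_1_one_minus_sq)
    ultimately have "?A = 0" by simp
    obtain a' c' where a': "a = one_minus_4t * a'" and c': "c = one_minus_4t * c'"
      using one_minus_4t_dvd[OF \<open>?A = 0\<close>] one_minus_4t_dvd[OF \<open>?C = 0\<close>] by blast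
    have "one_minus_4t * (b ^ 2 + a' ^ 2 * one_minus_4t) = one_minus_4t * ((d ^ 2 + c' ^ 2 * one_minus_4t) * one_minus_4x2t)"
      using eq1 unfolding a' c' by (simp add: algebra_simps power2_eq_square)
    then have eq1': "b ^ 2 + a' ^ 2 * one_minus_4t = (d ^ 2 + c' ^ 2 * one_minus_4t) * one_minus_4x2t"
      using u0 by simp
    have "one_minus_4t * (b * a') = one_minus_4t * (d * c' * one_minus_4x2t)"
      using eq2 unfolding a' c' by (simp add: algebra_simps)
    then have eq2': "b * a' = d * c' * one_minus_4x2t" using u0 by simp
    have "length (coeffs b) + length (coeffs a') + length (coeffs d) + length (coeffs c') <
          length (coeffs a) + length (coeffs b) + length (coeffs c) + length (coeffs d)"
      using False unfolding a' c' length_coeffs_one_minus_4t_mult by auto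
    from less.hyps[OF this eq1' eq2'] show ?thesis using a' c' by simp
  qed
qed

lemma sqrt_1_4t_independent:
  assumes "fps_of_poly p + fps_of_poly q * sqrt_1_4t = 0"
  shows "p = 0 \<and> q = 0"
proof -
  have "fps_of_poly p = - (fps_of_poly q * sqrt_1_4t)" using assms by (simp add: eq_neg_iff_add_eq_0)
  then have "fps_of_poly p * fps_of_poly p = fps_of_poly q * fps_of_poly q * (sqrt_1_4t * sqrt_1_4t)"
    by (simp add: algebra_simps)
  then have "fps_of_poly (p ^ 2) = fps_of_poly (q ^ 2 * one_minus_4t)"
    by (simp add: sqrt_1_4t_sq fps_of_poly_mult power2_eq_square)
  then have "p ^ 2 = q ^ 2 * one_minus_4t" by (simp add: fps_of_poly_eq_iff)
  then have "q = 0" by (rule sq_eq_sq_mult_odd_degree) (simp add: one_minus_4t_def)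
  then show ?thesis using assms by (simp add: fps_of_poly_eq_iff[of p 0, simplified])
qed

lemma sqrt_1_4t_sqrt_1_4x2t_independent:
  assumes "fps_of_poly a0 + fps_of_poly a1 * sqrt_1_4t + fps_of_poly a2 * sqrt_1_4x2t +
           fps_of_poly a3 * sqrt_1_4t * sqrt_1_4x2t = 0"
  shows "a0 = 0 \<and> a1 = 0 \<and> a2 = 0 \<and> a3 = 0"
proof -
  let ?E = "fps_of_poly :: tpoly \<Rightarrow> rat poly fps" and ?s = sqrt_1_4t
  define P0 P1 where "P0 = ?E a0 + ?E a1 * ?s" and "P1 = ?E a2 + ?E a3 * ?s"
  have "P0 = - (P1 * sqrt_1_4x2t)"
    using assms by (simp add: P0_def P1_def algebra_simps eq_neg_iff_add_eq_0)
  then have P: "P0 * P0 = P1 * P1 * (sqrt_1_4x2t * sqrt_1_4x2t)" by (simp add: algebra_simps)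
  have "P0 * P0 = ?E (a0 ^ 2 + a1 ^ 2 * one_minus_4t) + ?E (2 * a0 * a1) * ?s"
    by (simp add: P0_def algebra_simps power2_eq_square fps_of_poly_mult fps_of_poly_add
        sqrt_1_4t_sq[symmetric])
  moreover have "P1 * P1 * (sqrt_1_4x2t * sqrt_1_4x2t) =
      ?E ((a2 ^ 2 + a3 ^ 2 * one_minus_4t) * one_minus_4x2t) + ?E (2 * a2 * a3 * one_minus_4x2t) * ?s"
    by (simp add: P1_def algebra_simps power2_eq_square fps_of_poly_mult fps_of_poly_add
        sqrt_1_4t_sq[symmetric] sqrt_1_4x2t_sq[symmetric])
  ultimately have "?E (a0 ^ 2 + a1 ^ 2 * one_minus_4t - (a2 ^ 2 + a3 ^ 2 * one_minus_4t) * one_minus_4x2t) +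
                   ?E (2 * a0 * a1 - 2 * a2 * a3 * one_minus_4x2t) * ?s = 0"
    using P by (simp add: fps_of_poly_diff algebra_simps)
  then have "a0 ^ 2 + a1 ^ 2 * one_minus_4t - (a2 ^ 2 + a3 ^ 2 * one_minus_4t) * one_minus_4x2t = 0 \<and>
             2 * a0 * a1 - 2 * a2 * a3 * one_minus_4x2t = 0"
    by (rule sqrt_1_4t_independent)
  then have "a0 ^ 2 + a1 ^ 2 * one_minus_4t = (a2 ^ 2 + a3 ^ 2 * one_minus_4t) * one_minus_4x2t"
    and "a0 * a1 = a2 * a3 * one_minus_4x2t"
    by (simp_all add: algebra_simps)
  then show ?thesis using one_minus_4x2t_not_square by simp
qed

definition poly_rescale :: "'a::comm_semiring_1 \<Rightarrow> nat \<Rightarrow> 'a poly \<Rightarrow> 'a poly" where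
  "poly_rescale c k p = (\<Sum>i\<le>k. monom (coeff p i * c ^ (k - i)) i)"

lemma coeff_poly_rescale:
  "coeff (poly_rescale c k p) j = (if j \<le> k then coeff p j * c ^ (k - j) else 0)"
  by (simp add: poly_rescale_def coeff_sum coeff_monom)

lemma degree_poly_rescale_le: "degree (poly_rescale c k p) \<le> k"
  by (rule degree_le) (simp add: coeff_poly_rescale)

lemma poly_poly_rescale:
  assumes "degree p \<le> k"
  shows "poly (poly_rescale c k p) (c * y) = c ^ k * poly p y"
proof -
  have "poly (poly_rescale c k p) (c * y) = (\<Sum>i\<le>k. c ^ k * (coeff p i * y ^ i))"
  proof (unfold poly_rescale_def poly_sum poly_monom, rule sum.cong[OF refl])
    fix i
    assume "i \<in> {..k}"
    then have ck: "c ^ k = c ^ (k - i) * c ^ i" by (simp add: power_add[symmetric])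
    show "coeff p i * c ^ (k - i) * (c * y) ^ i = c ^ k * (coeff p i * y ^ i)"
      unfolding ck by (simp add: power_mult_distrib mult_ac)
  qed
  also have "\<dots> = c ^ k * poly (\<Sum>i\<le>k. monom (coeff p i) i) y"
    by (simp add: sum_distrib_left poly_sum poly_monom)
  finally show ?thesis by (simp only: poly_as_sum_of_monoms'[OF assms])
qed

lemma (in comm_ring_hom) map_poly_poly_rescale:
  "map_poly f (poly_rescale c k p) = poly_rescale (f c) k (map_poly f p)"
proof -
  have "f (c ^ n) = f c ^ n" for n by (induction n) (simp_all add: hom_one hom_mult)
  then show ?thesis
    by (intro poly_eqI) (simp add: coeff_map_poly coeff_poly_rescale hom_zero hom_mult)
qed

abbreviation x_fps :: "rat poly fps" where
  "x_fps \<equiv> fps_const [:0, 1:]"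

definition H_denom :: "rat poly fps" where
  "H_denom = 4 * fps_X * (1 - x_fps) * sqrt_1_4t *
             (4 * fps_X * x_fps - (1 - sqrt_1_4x2t) * (1 - sqrt_1_4t))"

definition H_numer :: "rat poly fps" where
  "H_numer = x_fps * (1 - sqrt_1_4t) * (1 - sqrt_1_4t) *
             (4 * fps_X * x_fps - (1 - sqrt_1_4x2t) * (1 - sqrt_1_4t) - 2 * sqrt_1_4t * (1 - sqrt_1_4x2t))"

lemma H_denom_mult_H: "H_denom * H_fps = H_numer"
proof -
  let ?C = "catalan_fps :: rat poly fps" and ?a = "catalan_at ([:0, 1:] ^ 2)"
    and ?w = "marked_kernel [:0, 1:]" and ?A = "marked_fps (1 :: rat poly)" and ?B = "marked_fps [:0, 1:]"
  define x where "x = x_fps"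
  have r: "sqrt_1_4x2t = 1 - 2 * x ^ 2 * fps_X * ?a"
    by (simp add: x_def sqrt_1_4x2t_def fps_const_power)
  have w: "?w = x * fps_X * ?a * ?C" by (simp add: marked_kernel_def x_def)
  have H: "(1 - x) * H_fps = x * (?A - ?B)"
    using H_at_eq[of "[:0, 1:]"] by (simp add: x_def H_fps_eq_H_at fps_const_sub[symmetric])
  have A: "sqrt_1_4t * ?A = fps_X * ?C ^ 2" using marked_fps_1_eq by (simp add: sqrt_1_4t_def)
  have B: "(1 - ?w) * ?B = ?w * ?C" by (rule marked_fps_eq)
  have denom: "H_denom = 16 * fps_X ^ 2 * x * sqrt_1_4t * (1 - ?w) * (1 - x)"
    unfolding H_denom_def x_def[symmetric]
    by (simp add: w r sqrt_1_4t_def algebra_simps power2_eq_square)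
  have "H_denom * H_fps = 16 * fps_X ^ 2 * x * sqrt_1_4t * (1 - ?w) * ((1 - x) * H_fps)"
    unfolding denom by (simp only: mult.assoc)
  also have "\<dots> = 16 * fps_X ^ 2 * x ^ 2 * ((1 - ?w) * (sqrt_1_4t * ?A) - sqrt_1_4t * ((1 - ?w) * ?B))"
    unfolding H by (simp add: algebra_simps power2_eq_square)
  also have "\<dots> = 16 * fps_X ^ 2 * x ^ 2 * ((1 - ?w) * (fps_X * ?C ^ 2) - sqrt_1_4t * (?w * ?C))"
    unfolding A B ..
  also have "\<dots> = H_numer"
    unfolding H_numer_def x_def[symmetric]
    by (simp add: w r sqrt_1_4t_def algebra_simps power2_eq_square)
  finally show ?thesis .
qed

interpretation fps_of_poly_hom: comm_ring_hom "fps_of_poly :: tpoly \<Rightarrow> rat poly fps"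
  by unfold_locales (simp_all add: fps_of_poly_add fps_of_poly_mult)

text \<open>Coordinates are shown to be nonzero by specializing \<open>t = 1\<close>, \<open>x = 2\<close>.\<close>
definition specialize_1_2 :: "tpoly \<Rightarrow> rat" where
  "specialize_1_2 p = poly (poly p [:1:]) 2"

interpretation specialize_hom: comm_ring_hom specialize_1_2
  by unfold_locales (simp_all add: specialize_1_2_def)

abbreviation quad_mult_sqrt :: "tpoly quad \<Rightarrow> tpoly quad \<Rightarrow> tpoly quad" where
  "quad_mult_sqrt \<equiv> quad_mult one_minus_4t one_minus_4x2t"

abbreviation quad_eval_sqrt :: "tpoly quad \<Rightarrow> rat poly fps" where
  "quad_eval_sqrt \<equiv> quad_eval fps_of_poly sqrt_1_4t sqrt_1_4x2t"

definition t_poly :: tpoly where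
  "t_poly = [:0, 1:]"

definition x_poly :: tpoly where
  "x_poly = [:[:0, 1:]:]"

definition quad_H_denom_factor :: "tpoly quad" where
  "quad_H_denom_factor = quad_diff (quad_const (4 * t_poly * x_poly))
     (quad_mult_sqrt (quad_diff (quad_const 1) quad_r) (quad_diff (quad_const 1) quad_s))"

definition quad_H_denom :: "tpoly quad" where
  "quad_H_denom = quad_mult_sqrt (quad_mult_sqrt (quad_const (4 * t_poly * (1 - x_poly))) quad_s) quad_H_denom_factor"

definition quad_H_numer :: "tpoly quad" where
  "quad_H_numer = quad_mult_sqrt (quad_mult_sqrt (quad_mult_sqrt (quad_const x_poly) (quad_diff (quad_const 1) quad_s))
     (quad_diff (quad_const 1) quad_s))
     (quad_diff quad_H_denom_factor (quad_mult_sqrt (quad_mult_sqrt (quad_const 2) quad_s) (quad_diff (quad_const 1) quad_r)))"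

lemmas quad_eval_sqrt_simps = fps_of_poly_hom.quad_eval_mult[OF sqrt_1_4t_sq sqrt_1_4x2t_sq]
  fps_of_poly_hom.quad_eval_add fps_of_poly_hom.quad_eval_diff fps_of_poly_hom.quad_eval_const
  fps_of_poly_hom.quad_eval_s fps_of_poly_hom.quad_eval_r

lemma fps_of_poly_t_poly: "fps_of_poly t_poly = fps_X"
  and fps_of_poly_x_poly: "fps_of_poly x_poly = x_fps"
  by (simp_all add: t_poly_def x_poly_def fps_of_poly_const)

lemma quad_eval_H_denom: "quad_eval_sqrt quad_H_denom = H_denom"
  by (simp add: quad_H_denom_def quad_H_denom_factor_def H_denom_def quad_eval_sqrt_simps
      fps_of_poly_mult fps_of_poly_diff fps_of_poly_t_poly fps_of_poly_x_poly algebra_simps)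

lemma quad_eval_H_numer: "quad_eval_sqrt quad_H_numer = H_numer"
  by (simp add: quad_H_numer_def quad_H_denom_factor_def H_numer_def quad_eval_sqrt_simps
      fps_of_poly_mult fps_of_poly_diff fps_of_poly_t_poly fps_of_poly_x_poly algebra_simps)

text \<open>The denominator times its \<open>s\<close>-conjugate has no \<open>s\<close>-coordinates, and that product times its
  \<open>r\<close>-conjugate is the polynomial \<open>H_norm\<close>; multiplying \<open>H_denom * H = H_numer\<close> by both conjugates
  therefore writes \<open>H_norm * H\<close> in the coordinates \<open>1, s, r, s r\<close>.\<close>
definition quad_norm_s :: "tpoly quad" where
  "quad_norm_s = quad_mult_sqrt quad_H_denom (conj_s quad_H_denom)"

definition H_norm :: tpoly where
  "H_norm = q0 quad_norm_s * q0 quad_norm_s - q2 quad_norm_s * q2 quad_norm_s * one_minus_4x2t"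

definition quad_norm_H :: "tpoly quad" where
  "quad_norm_H = quad_mult_sqrt (quad_mult_sqrt (conj_r quad_norm_s) (conj_s quad_H_denom)) quad_H_numer"

lemma quad_norm_s_eq: "quad_norm_s = Quad (q0 quad_norm_s) 0 (q2 quad_norm_s) 0"
  using quad.collapse[of quad_norm_s] quad_mult_conj_s[of _ _ quad_H_denom] by (metis quad_norm_s_def)

lemma quad_mult_conj_r_norm_s: "quad_mult_sqrt (conj_r quad_norm_s) quad_norm_s = Quad H_norm 0 0 0"
  by (subst (1 2) quad_norm_s_eq) (simp only: quad_mult_conj_r H_norm_def)

lemma quad_eval_norm_H: "quad_eval_sqrt quad_norm_H = fps_of_poly H_norm * H_fps"
proof -
  have "quad_eval_sqrt quad_norm_H = quad_eval_sqrt (conj_r quad_norm_s) * quad_eval_sqrt (conj_s quad_H_denom) * H_numer"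
    by (simp add: quad_norm_H_def quad_eval_sqrt_simps quad_eval_H_numer)
  also have "\<dots> = quad_eval_sqrt (conj_r quad_norm_s) * (quad_eval_sqrt quad_H_denom * quad_eval_sqrt (conj_s quad_H_denom)) * H_fps"
    by (simp add: quad_eval_H_denom H_denom_mult_H[symmetric] algebra_simps)
  also have "\<dots> = quad_eval_sqrt (quad_mult_sqrt (conj_r quad_norm_s) quad_norm_s) * H_fps"
    by (simp add: quad_norm_s_def quad_eval_sqrt_simps)
  finally show ?thesis by (simp add: quad_mult_conj_r_norm_s)
qed

lemma specialize_1_2_simps [simp]:
  "specialize_1_2 t_poly = 1" "specialize_1_2 x_poly = 2"
  "specialize_1_2 one_minus_4t = -3" "specialize_1_2 one_minus_4x2t = -15"
  "specialize_1_2 (numeral n) = numeral n"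
  by (simp_all add: specialize_1_2_def t_poly_def x_poly_def one_minus_4t_def one_minus_4x2t_def
      numeral_poly)

lemmas map_quad_specialize_simps = specialize_hom.map_quad_mult specialize_hom.map_quad_add
  specialize_hom.map_quad_diff specialize_hom.map_quad_const specialize_hom.map_quad_s
  specialize_hom.map_quad_r specialize_hom.map_quad_conj_s specialize_hom.map_quad_conj_r
  specialize_hom.hom_mult specialize_hom.hom_add specialize_hom.hom_diff specialize_hom.hom_one
  specialize_hom.hom_uminus

lemma map_quad_specialize_H_denom: "map_quad specialize_1_2 quad_H_denom = Quad 12 (-28) (-12) (-4)"
  by (simp only: quad_H_denom_def quad_H_denom_factor_def map_quad_specialize_simps)
     (simp add: quad_const_def quad_s_def quad_r_def)

lemma map_quad_specialize_H_numer: "map_quad specialize_1_2 quad_H_numer = Quad (-40) (-24) 8 (-8)"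
  by (simp only: quad_H_numer_def quad_H_denom_factor_def map_quad_specialize_simps)
     (simp add: quad_const_def quad_s_def quad_r_def)

lemma map_quad_specialize_norm_s: "map_quad specialize_1_2 quad_norm_s = Quad (-384) 0 384 0"
  by (simp only: quad_norm_s_def map_quad_specialize_simps map_quad_specialize_H_denom) simp

lemma H_norm_nonzero: "H_norm \<noteq> 0"
proof -
  have "map_quad specialize_1_2 (quad_mult_sqrt (conj_r quad_norm_s) quad_norm_s) = Quad 2359296 0 0 0"
    by (simp only: map_quad_specialize_simps map_quad_specialize_norm_s) simp
  then have "specialize_1_2 H_norm \<noteq> 0" unfolding quad_mult_conj_r_norm_s by simp
  then show ?thesis using specialize_hom.hom_zero by auto
qed

lemma quad_norm_H_nonzero: "q1 quad_norm_H \<noteq> 0" "q2 quad_norm_H \<noteq> 0" "q3 quad_norm_H \<noteq> 0"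
proof -
  have "map_quad specialize_1_2 quad_norm_H = Quad 8257536 2752512 (-1179648) 1179648"
    by (simp only: quad_norm_H_def map_quad_specialize_simps map_quad_specialize_H_denom
        map_quad_specialize_H_numer map_quad_specialize_norm_s) simp
  then have "specialize_1_2 (q1 quad_norm_H) \<noteq> 0" "specialize_1_2 (q2 quad_norm_H) \<noteq> 0"
    "specialize_1_2 (q3 quad_norm_H) \<noteq> 0"
    by (simp_all add: quad.map_sel[symmetric])
  then show "q1 quad_norm_H \<noteq> 0" "q2 quad_norm_H \<noteq> 0" "q3 quad_norm_H \<noteq> 0"
    using specialize_hom.hom_zero by auto
qed

definition annih_lin :: "tpoly poly" where
  "annih_lin = [:- q0 quad_norm_H, H_norm:]"

definition annih_even :: "tpoly poly" where
  "annih_even = annih_lin ^ 2 +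
     [:q2 quad_norm_H ^ 2 * one_minus_4x2t - one_minus_4t * q1 quad_norm_H ^ 2 -
       one_minus_4t * q3 quad_norm_H ^ 2 * one_minus_4x2t:]"

definition annih_odd :: "tpoly poly" where
  "annih_odd = smult (2 * q2 quad_norm_H) annih_lin + [:2 * one_minus_4t * q1 quad_norm_H * q3 quad_norm_H:]"

text \<open>With \<open>N H = \<alpha> + \<beta> s + \<gamma> r + \<delta> s r\<close> (\<open>N = H_norm\<close>), the linear polynomial \<open>annih_lin = N y - \<alpha>\<close>
  takes the value \<open>\<beta> s + \<gamma> r + \<delta> s r\<close> at \<open>H\<close>; squaring it leaves \<open>r\<close> only in a term
  \<open>r \<cdot> annih_odd(H)\<close>, and squaring once more removes \<open>r\<close>.\<close>
definition annihilator :: "tpoly poly" where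
  "annihilator = annih_even ^ 2 - [:one_minus_4x2t:] * annih_odd ^ 2"

lemma poly_annih_lin:
  "poly (map_poly fps_of_poly annih_lin) H_fps =
     fps_of_poly (q1 quad_norm_H) * sqrt_1_4t + fps_of_poly (q2 quad_norm_H) * sqrt_1_4x2t +
     fps_of_poly (q3 quad_norm_H) * sqrt_1_4t * sqrt_1_4x2t"
proof -
  have "quad_eval_sqrt quad_norm_H =
        fps_of_poly (q0 quad_norm_H) + fps_of_poly (q1 quad_norm_H) * sqrt_1_4t +
        fps_of_poly (q2 quad_norm_H) * sqrt_1_4x2t + fps_of_poly (q3 quad_norm_H) * sqrt_1_4t * sqrt_1_4x2t"
    by (rule quad_eval_sel)
  then show ?thesis
    using quad_eval_norm_H
    by (simp add: annih_lin_def fps_of_poly_hom.map_poly_hom_pCons fps_of_poly_uminus algebra_simps)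
qed

lemma poly_annih_even:
  "poly (map_poly fps_of_poly annih_even) H_fps = sqrt_1_4x2t * poly (map_poly fps_of_poly annih_odd) H_fps"
proof -
  let ?E = "fps_of_poly :: tpoly \<Rightarrow> rat poly fps"
  define Y where "Y = poly (map_poly ?E annih_lin) H_fps"
  have "poly (map_poly ?E annih_even) H_fps =
        Y ^ 2 + (?E (q2 quad_norm_H) ^ 2 * (sqrt_1_4x2t * sqrt_1_4x2t) -
                 (sqrt_1_4t * sqrt_1_4t) * ?E (q1 quad_norm_H) ^ 2 -
                 (sqrt_1_4t * sqrt_1_4t) * ?E (q3 quad_norm_H) ^ 2 * (sqrt_1_4x2t * sqrt_1_4x2t))"
    by (simp add: annih_even_def Y_def fps_of_poly_hom.map_poly_hom_add fps_of_poly_hom.map_poly_hom_power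
        fps_of_poly_hom.map_poly_hom_pCons fps_of_poly_mult fps_of_poly_diff fps_of_poly_power
        sqrt_1_4t_sq sqrt_1_4x2t_sq)
  also have "\<dots> = sqrt_1_4x2t * (2 * ?E (q2 quad_norm_H) * Y + 2 * (sqrt_1_4t * sqrt_1_4t) * ?E (q1 quad_norm_H) * ?E (q3 quad_norm_H))"
    unfolding Y_def poly_annih_lin by (simp add: algebra_simps power2_eq_square)
  also have "\<dots> = sqrt_1_4x2t * poly (map_poly ?E annih_odd) H_fps"
    by (simp add: annih_odd_def Y_def fps_of_poly_hom.map_poly_hom_add fps_of_poly_hom.map_poly_hom_smult
        fps_of_poly_hom.map_poly_hom_pCons fps_of_poly_mult sqrt_1_4t_sq)
  finally show ?thesis .
qed

lemma annihilator_root: "eval_at_H annihilator = 0"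
proof -
  have "eval_at_H annihilator =
        poly (map_poly fps_of_poly annih_even) H_fps ^ 2 -
        fps_of_poly one_minus_4x2t * poly (map_poly fps_of_poly annih_odd) H_fps ^ 2"
    by (simp add: eval_at_H_def annihilator_def fps_of_poly_hom.map_poly_hom_diff
        fps_of_poly_hom.map_poly_hom_mult fps_of_poly_hom.map_poly_hom_power fps_of_poly_hom.map_poly_hom_pCons
        fps_of_poly_hom.map_poly_hom_smult)
  then show ?thesis
    unfolding poly_annih_even sqrt_1_4x2t_sq[symmetric] by (simp add: algebra_simps power2_eq_square)
qed

lemma degree_annihilator: "degree annihilator = 4"
proof -
  have lin: "degree annih_lin = 1" "annih_lin \<noteq> 0" using H_norm_nonzero by (auto simp: annih_lin_def)
  have "degree annih_even = 2"
    unfolding annih_even_def using lin by (subst degree_add_eq_left) (simp_all add: degree_power_eq)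
  then have even: "degree (annih_even ^ 2) = 4" by (subst degree_power_eq) auto
  have "degree annih_odd \<le> 1"
    unfolding annih_odd_def using lin degree_smult_le[of _ annih_lin]
    by (intro degree_add_le) simp_all
  then have "degree ([:one_minus_4x2t:] * annih_odd ^ 2) \<le> 2"
    using degree_mult_le[of "[:one_minus_4x2t:]" "annih_odd ^ 2"] degree_power_le[of annih_odd 2] by simp
  then show ?thesis
    unfolding annihilator_def using even by (subst diff_conv_add_uminus, subst degree_add_eq_left) simp_all
qed

section \<open>Minimality\<close>

definition H_conj :: "tpoly \<Rightarrow> tpoly \<Rightarrow> rat poly fps" where
  "H_conj e d = quad_eval fps_of_poly (fps_of_poly e * sqrt_1_4t) (fps_of_poly d * sqrt_1_4x2t) quad_norm_H"

lemma H_conj_eq: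
  "H_conj e d = fps_of_poly (q0 quad_norm_H) + fps_of_poly (e * q1 quad_norm_H) * sqrt_1_4t +
     fps_of_poly (d * q2 quad_norm_H) * sqrt_1_4x2t + fps_of_poly (e * d * q3 quad_norm_H) * sqrt_1_4t * sqrt_1_4x2t"
  by (simp add: H_conj_def quad_eval_sel fps_of_poly_mult algebra_simps)

lemma H_conj_inj:
  assumes "H_conj e d = H_conj e' d'"
  shows "e = e' \<and> d = d'"
proof -
  have "fps_of_poly 0 + fps_of_poly ((e - e') * q1 quad_norm_H) * sqrt_1_4t +
        fps_of_poly ((d - d') * q2 quad_norm_H) * sqrt_1_4x2t +
        fps_of_poly ((e * d - e' * d') * q3 quad_norm_H) * sqrt_1_4t * sqrt_1_4x2t = 0"
    using assms unfolding H_conj_eq by (simp add: fps_of_poly_mult fps_of_poly_diff algebra_simps)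
  then have "(e - e') * q1 quad_norm_H = 0" "(d - d') * q2 quad_norm_H = 0"
    using sqrt_1_4t_sqrt_1_4x2t_independent by blast+
  then show ?thesis using quad_norm_H_nonzero by simp
qed

lemma sign_mult_sq:
  fixes e :: tpoly
  assumes "e \<in> {1, -1}" "S * S = fps_of_poly w"
  shows "(fps_of_poly e * S) * (fps_of_poly e * S) = fps_of_poly w"
proof -
  have "e * e = 1" using assms(1) by auto
  then have ee: "fps_of_poly e * fps_of_poly e = (1 :: rat poly fps)" by (metis fps_of_poly_mult fps_of_poly_1)
  have "(fps_of_poly e * S) * (fps_of_poly e * S) = (fps_of_poly e * fps_of_poly e) * (S * S)"
    by (simp only: mult_ac)
  also have "\<dots> = fps_of_poly w" using ee assms(2) by simp
  finally show ?thesis .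
qed

text \<open>A polynomial relation over \<open>Q[x][t]\<close> that holds at \<open>N H\<close> holds at all four conjugates of \<open>N H\<close>,
  because \<open>1, s, r, s r\<close> are linearly independent.\<close>
lemma H_conj_root:
  assumes root: "poly (map_poly fps_of_poly P) (fps_of_poly H_norm * H_fps) = 0"
    and sign: "e \<in> {1, -1}" "d \<in> {1, -1}"
  shows "poly (map_poly fps_of_poly P) (H_conj e d) = 0"
proof -
  obtain z where z: "\<And>S R. S * S = fps_of_poly one_minus_4t \<Longrightarrow> R * R = fps_of_poly one_minus_4x2t \<Longrightarrow>
      poly (map_poly fps_of_poly P) (quad_eval fps_of_poly S R quad_norm_H) = quad_eval fps_of_poly S R z"
    using fps_of_poly_hom.poly_map_poly_quad_eval[of one_minus_4t one_minus_4x2t P quad_norm_H] by blast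
  have "quad_eval_sqrt z = 0"
    using z[OF sqrt_1_4t_sq sqrt_1_4x2t_sq] root by (simp add: quad_eval_norm_H)
  then have "q0 z = 0 \<and> q1 z = 0 \<and> q2 z = 0 \<and> q3 z = 0"
    unfolding quad_eval_sel by (rule sqrt_1_4t_sqrt_1_4x2t_independent)
  then have "quad_eval fps_of_poly S R z = 0" for S R
    by (simp add: quad_eval_sel)
  then show ?thesis
    unfolding H_conj_def using z[OF sign_mult_sq[OF sign(1) sqrt_1_4t_sq] sign_mult_sq[OF sign(2) sqrt_1_4x2t_sq]]
    by simp
qed

theorem annihilator_minimal:
  assumes Q: "Q \<noteq> 0" "eval_at_H Q = 0"
  shows "4 \<le> degree Q"
proof (rule ccontr)
  assume "\<not> 4 \<le> degree Q"
  define k where "k = degree Q"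
  define M where "M = map_poly (fps_of_poly :: tpoly \<Rightarrow> rat poly fps) (poly_rescale H_norm k Q)"
  have M_eq: "M = poly_rescale (fps_of_poly H_norm) k (map_poly fps_of_poly Q)"
    by (simp add: M_def fps_of_poly_hom.map_poly_poly_rescale)
  have "coeff M k = fps_of_poly (lead_coeff Q)"
    by (simp add: M_eq coeff_poly_rescale coeff_map_poly k_def)
  then have M0: "M \<noteq> 0" using Q(1) by (auto simp: fps_of_poly_eq_iff[of _ 0, simplified])
  have "degree M \<le> k" unfolding M_eq by (rule degree_poly_rescale_le)
  have "degree (map_poly (fps_of_poly :: tpoly \<Rightarrow> rat poly fps) Q) \<le> k"
    unfolding k_def by (rule map_poly_degree_leq)
  then have "poly M (fps_of_poly H_norm * H_fps) = 0"
    using Q(2) by (simp add: M_eq poly_poly_rescale eval_at_H_def)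
  then have roots: "poly M (H_conj e d) = 0" if "e \<in> {1, -1}" "d \<in> {1, -1}" for e d
    unfolding M_def using H_conj_root that by blast
  let ?R = "{H_conj 1 1, H_conj 1 (-1), H_conj (-1) 1, H_conj (-1) (-1)}"
  have "card ?R = 4"
    using H_conj_inj by (auto simp: card_insert_if) (metis one_neq_neg_one)+
  moreover have "card ?R \<le> card {y. poly M y = 0}"
    using roots by (intro card_mono[OF poly_roots_finite[OF M0]]) auto
  moreover have "card {y. poly M y = 0} \<le> degree M"
    by (rule card_poly_roots_bound[OF M0])
  ultimately show False using \<open>degree M \<le> k\<close> \<open>\<not> 4 \<le> degree Q\<close> k_def by linarith
qed

theorem proposition17:
  shows "(\<exists>P. P \<noteq> 0 \<and> degree P = 4 \<and> eval_at_H P = 0 \<and>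
            (\<forall>Q. Q \<noteq> 0 \<and> eval_at_H Q = 0 \<longrightarrow> 4 \<le> degree Q)) \<and>
         (\<exists>\<epsilon>>0. \<forall>t x::real. 0 < t \<and> t < \<epsilon> \<and> 0 < x \<and> x < 1 \<longrightarrow>
            ((\<lambda>(n, m). real (h n m) * t ^ n * x ^ m) has_sum H_closed t x) UNIV)"
proof (rule conjI)
  show "\<exists>P. P \<noteq> 0 \<and> degree P = 4 \<and> eval_at_H P = 0 \<and> (\<forall>Q. Q \<noteq> 0 \<and> eval_at_H Q = 0 \<longrightarrow> 4 \<le> degree Q)"
    using degree_annihilator annihilator_root annihilator_minimal
    by (intro exI[of _ annihilator]) auto
next
  show "\<exists>\<epsilon>>0. \<forall>t x::real. 0 < t \<and> t < \<epsilon> \<and> 0 < x \<and> x < 1 \<longrightarrow>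
          ((\<lambda>(n, m). real (h n m) * t ^ n * x ^ m) has_sum H_closed t x) UNIV"
  proof (intro exI[of _ "1 / 18"] conjI allI impI)
    fix t x :: real
    assume tx: "0 < t \<and> t < 1 / 18 \<and> 0 < x \<and> x < 1"
    then have "norm t < fps_conv_radius (H_at x)"
      by (intro fps_radius_ge_less[OF fps_radius_ge_H_at]) auto
    then show "((\<lambda>(n, m). real (h n m) * t ^ n * x ^ m) has_sum H_closed t x) UNIV"
      using has_sum_h[of t x] eval_H_at[of t x] tx by simp
  qed simp
qed

end
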